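(* Let $D>0$, $a\in\mathbb{R}$, $g>0$, $r_{\rm g}>0$, $l_{\rm c}>0$, $c_\infty>0$, $\tilde a,\beta\in\mathbb{R}$, $l_{\rm s}>0$, $\gamma>0$ with $\gamma\ge a/D$, $\bar l>l_{\rm s}$, and $\bar v=\min\{\frac{g}{4\gamma},\frac{D}{8\bar l}\}$. Let $A,B,C,K,\phi,k,F,P,Q$ be as in the context, and consider a solution $(w(\cdot,t),X(t))$, $X=[z_1\ z_2]^\top$, $l(t)=l_{\rm s}+z_2(t)$, of the target system $$w_t=Dw_{xx}-aw_x-gw-\dot l(t)F(x,X(t)),\quad 0<x<l(t),$$ $$w_x(0,t)=\gamma w(0,t),\quad w(l(t),t)=0,\quad \dot X=(A+BK^\top)X+Bw_x(l(t),t),$$ with Lyapunov function $$V=\frac{d_1}{2}\int_0^{l(t)}w^2dx+\frac12\int_0^{l(t)}w_x^2dx+\frac{\gamma}{2}w(0,t)^2+d_2X^\top PX,$$ where $d_1>0$ is sufficiently large and $d_2>0$ sufficiently small, and let $\alpha=\min\{2g+\frac{D}{4\bar l},\frac{4g+d_1D}{2},\frac{\lambda_{\min}(Q)}{2\lambda_{\max}(P)},\frac{d_2(2d_1D+g)}{4}\}$. Then there exists $M>0$ such that if $V(0)<M$, then $0<l(t)\le\bar l$ and $|\dot l(t)|\le\bar v$ for all $t\ge0$, and $V(t)\le V(0)\exp(-\frac{\alpha}{2}t)$ for all $t\ge0$.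
   Context: $A=\begin{bmatrix}\tilde a&0\\ r_{\rm g}&0\end{bmatrix}$, $B=[-\beta\ \ 0]^\top$, $C=[1\ \ -\frac{(a-gl_{\rm c})c_\infty}{D}]^\top$; $K\in\mathbb{R}^2$ is chosen so that $A+BK^\top$ is Hurwitz. $N_1=\begin{bmatrix}0&\frac1D(gI+A+\frac aD BC^\top)\\ I&\frac1D(BC^\top+aI)\end{bmatrix}$, $\phi(x)^\top=[C^\top\ \ K^\top-\frac1D C^\top BC^\top]e^{N_1x}\begin{bmatrix}I\\0\end{bmatrix}$, $k(x,y)=-\frac1D\phi(x-y)^\top B$, $F(x,X)=(\phi'(x-l(t))^\top-k(x,l(t))C^\top)X$. $P,Q$ are positive definite with $(A+BK^\top)^\top P+P(A+BK^\top)=-Q$; $\lambda_{\min},\lambda_{\max}$ denote smallest/largest eigenvalues. Note $\dot l(t)=r_{\rm g}z_1(t)$. The model is the backstepping target system for the error dynamics of tubulin concentration in a growing axon. *)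

theory Defs
  imports "HOL-Analysis.Analysis"
begin

primrec mpow :: "real^'n^'n \<Rightarrow> nat \<Rightarrow> real^'n^'n" where
  "mpow M 0 = mat 1"
| "mpow M (Suc k) = M ** mpow M k"

definition mexp :: "real^'n^'n \<Rightarrow> real^'n^'n" where
  "mexp M = (\<Sum>k. (1 / fact k) *\<^sub>R mpow M k)"

definition hurwitz :: "real^'n^'n \<Rightarrow> bool" where
  "hurwitz M \<longleftrightarrow> (\<forall>\<mu>::complex.
      det (mat \<mu> - (\<chi> i j. complex_of_real (M $ i $ j))) = 0 \<longrightarrow> Re \<mu> < 0)"

definition pos_def :: "real^'n^'n \<Rightarrow> bool" where
  "pos_def M \<longleftrightarrow> transpose M = M \<and> (\<forall>x. x \<noteq> 0 \<longrightarrow> x \<bullet> (M *v x) > 0)"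

definition real_eigenvalues :: "real^'n^'n \<Rightarrow> real set" where
  "real_eigenvalues M = {\<mu>. \<exists>v. v \<noteq> 0 \<and> M *v v = \<mu> *\<^sub>R v}"

definition lambda_min :: "real^'n^'n \<Rightarrow> real" where
  "lambda_min M = Min (real_eigenvalues M)"

definition lambda_max :: "real^'n^'n \<Rightarrow> real" where
  "lambda_max M = Max (real_eigenvalues M)"

definition outer :: "real^'n \<Rightarrow> real^'m \<Rightarrow> real^'m^'n" where
  "outer u v = (\<chi> i j. u $ i * v $ j)"

definition matA :: "real \<Rightarrow> real \<Rightarrow> real^2^2" where
  "matA atl rg = vector [vector [atl, 0], vector [rg, 0]]"

definition vecB :: "real \<Rightarrow> real^2" where
  "vecB \<beta> = vector [- \<beta>, 0]"

definition vecC :: "real \<Rightarrow> real \<Rightarrow> real \<Rightarrow> real \<Rightarrow> real \<Rightarrow> real^2" where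
  "vecC a g lc cinf D = vector [1, - ((a - g * lc) * cinf / D)]"

definition blockmat :: "real^2^2 \<Rightarrow> real^2^2 \<Rightarrow> real^2^2 \<Rightarrow> real^2^2 \<Rightarrow> real^(2+2)^(2+2)" where
  "blockmat M11 M12 M21 M22 = (\<chi> i j. case (i, j) of
       (Inl p, Inl q) \<Rightarrow> M11 $ p $ q
     | (Inl p, Inr q) \<Rightarrow> M12 $ p $ q
     | (Inr p, Inl q) \<Rightarrow> M21 $ p $ q
     | (Inr p, Inr q) \<Rightarrow> M22 $ p $ q)"

definition matN1 :: "real \<Rightarrow> real \<Rightarrow> real \<Rightarrow> real^2^2 \<Rightarrow> real^2 \<Rightarrow> real^2 \<Rightarrow> real^(2+2)^(2+2)" where
  "matN1 D a g A B C = blockmat 0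
       ((1 / D) *\<^sub>R (mat g + A + (a / D) *\<^sub>R outer B C))
       (mat 1)
       ((1 / D) *\<^sub>R (outer B C + mat a))"

text \<open>phi(x)^T = [C^T, K^T - (1/D) C^T B C^T] e^{N_1 x} [I; 0].\<close>
definition phi :: "real \<Rightarrow> real \<Rightarrow> real \<Rightarrow> real^2^2 \<Rightarrow> real^2 \<Rightarrow> real^2 \<Rightarrow> real^2 \<Rightarrow> real \<Rightarrow> real^2" where
  "phi D a g A B C K x =
     (let r = (\<chi> i. case i of Inl p \<Rightarrow> C $ p
                       | Inr p \<Rightarrow> (K - (1 / D) *\<^sub>R ((C \<bullet> B) *\<^sub>R C)) $ p) :: real^(2+2);
          E = (\<chi> i j. case i of Inl p \<Rightarrow> (mat 1 :: real^2^2) $ p $ j | Inr p \<Rightarrow> 0) :: real^2^(2+2)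
      in r v* (mexp (x *\<^sub>R matN1 D a g A B C) ** E))"

definition kker :: "real \<Rightarrow> real \<Rightarrow> real \<Rightarrow> real^2^2 \<Rightarrow> real^2 \<Rightarrow> real^2 \<Rightarrow> real^2 \<Rightarrow> real \<Rightarrow> real \<Rightarrow> real" where
  "kker D a g A B C K x y = - (1 / D) * (phi D a g A B C K (x - y) \<bullet> B)"

text \<open>F(x,X) = (phi'(x - l)^T - k(x,l) C^T) X, with l the current interface position.\<close>
definition Fterm :: "real \<Rightarrow> real \<Rightarrow> real \<Rightarrow> real^2^2 \<Rightarrow> real^2 \<Rightarrow> real^2 \<Rightarrow> real^2 \<Rightarrow> real \<Rightarrow> real \<Rightarrow> real^2 \<Rightarrow> real" where
  "Fterm D a g A B C K l x X =
     (vector_derivative (phi D a g A B C K) (at (x - l)) - kker D a g A B C K x l *\<^sub>R C) \<bullet> X"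

definition dom_cl :: "real \<Rightarrow> (real \<Rightarrow> real) \<Rightarrow> (real \<times> real) set" where
  "dom_cl ls z2 = {(x, t). 0 \<le> t \<and> 0 \<le> x \<and> x \<le> ls + z2 t}"

definition target_solution ::
  "real \<Rightarrow> real \<Rightarrow> real \<Rightarrow> real \<Rightarrow> real \<Rightarrow> real \<Rightarrow> real^2^2 \<Rightarrow> real^2 \<Rightarrow> real^2 \<Rightarrow> real^2 \<Rightarrow>
   (real \<Rightarrow> real \<Rightarrow> real) \<Rightarrow> (real \<Rightarrow> real \<Rightarrow> real) \<Rightarrow> (real \<Rightarrow> real \<Rightarrow> real) \<Rightarrow>
   (real \<Rightarrow> real \<Rightarrow> real) \<Rightarrow> (real \<Rightarrow> real \<Rightarrow> real) \<Rightarrow> (real \<Rightarrow> real) \<Rightarrow> (real \<Rightarrow> real) \<Rightarrow> bool" where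
  "target_solution D a g rg ls \<gamma> A B C K w wx wxx wt wxt z1 z2 \<longleftrightarrow>
     (let l = (\<lambda>t. ls + z2 t); X = (\<lambda>t. vector [z1 t, z2 t] :: real^2);
          \<Omega> = dom_cl ls z2 in
     \<comment> \<open>regularity: w in C^{2,1} with w_xt, on the closed moving domain\<close>
     continuous_on \<Omega> (\<lambda>(x, t). w x t) \<and> continuous_on \<Omega> (\<lambda>(x, t). wx x t) \<and>
     continuous_on \<Omega> (\<lambda>(x, t). wxx x t) \<and> continuous_on \<Omega> (\<lambda>(x, t). wt x t) \<and>
     continuous_on \<Omega> (\<lambda>(x, t). wxt x t) \<and>
     (\<forall>(x, t) \<in> \<Omega>.
        ((\<lambda>y. w y t) has_real_derivative wx x t) (at x within {0 .. l t}) \<and>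
        ((\<lambda>y. wx y t) has_real_derivative wxx x t) (at x within {0 .. l t}) \<and>
        ((\<lambda>s. w x s) has_real_derivative wt x t) (at t within {s. 0 \<le> s \<and> x \<le> l s}) \<and>
        ((\<lambda>s. wx x s) has_real_derivative wxt x t) (at t within {s. 0 \<le> s \<and> x \<le> l s})) \<and>
     \<comment> \<open>PDE, with \<open>l'(t) = r_g z_1(t)\<close>\<close>
     (\<forall>t \<ge> 0. \<forall>x. 0 < x \<and> x < l t \<longrightarrow>
        wt x t = D * wxx x t - a * wx x t - g * w x t
                 - rg * z1 t * Fterm D a g A B C K (l t) x (X t)) \<and>
     \<comment> \<open>boundary conditions\<close>
     (\<forall>t \<ge> 0. wx 0 t = \<gamma> * w 0 t \<and> w (l t) t = 0) \<and>
     \<comment> \<open>ODE\<close>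
     (\<forall>t \<ge> 0. (X has_vector_derivative
         ((A + outer B K) *v X t + wx (l t) t *\<^sub>R B)) (at t within {0..})))"

definition lyapV ::
  "real \<Rightarrow> real \<Rightarrow> real \<Rightarrow> real \<Rightarrow> real^2^2 \<Rightarrow>
   (real \<Rightarrow> real \<Rightarrow> real) \<Rightarrow> (real \<Rightarrow> real \<Rightarrow> real) \<Rightarrow> (real \<Rightarrow> real) \<Rightarrow> (real \<Rightarrow> real) \<Rightarrow> real \<Rightarrow> real" where
  "lyapV ls \<gamma> d1 d2 P w wx z1 z2 t =
     (let l = ls + z2 t; X = vector [z1 t, z2 t] :: real^2 in
       d1 / 2 * integral {0 .. l} (\<lambda>x. (w x t)\<^sup>2)
       + 1 / 2 * integral {0 .. l} (\<lambda>x. (wx x t)\<^sup>2)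
       + \<gamma> / 2 * (w 0 t)\<^sup>2
       + d2 * (X \<bullet> (P *v X)))"

end

theory Submission
  imports Defs
begin

(* Differentiating the Lyapunov functional V along a classical solution needs the Leibniz rule on
   the moving interval [0, l(t)].  Integration by parts with w_x(0) = gamma w(0) and w(l) = 0 turns
   the PDE into the usual L2 and H1 energy estimates, the boundary flux w_x(l)^2 is bounded by
   gamma^2 w(0)^2 + |w_x|^2 + |w_xx|^2, and the Lyapunov equation handles the ODE part.  Since phi is
   C^1, the source term l'(t) F(x, X) is bounded by |l'| C_F |X|.  Hence, as long as the state X stays
   in a small ball (so that 0 < l <= lbar and |l'| is small), V' <= - c V with c = min g (q / (4 p1)),
   and c >= alpha / 2 once d2 is small.  As V bounds |X|^2 from below, a continuation argument keeps X
   in the ball for all times when V(0) is small. *)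

section \<open>Smoothness of the kernel\<close>

definition matrix_l1 :: "real^'n^'m \<Rightarrow> real" where
  "matrix_l1 M = (\<Sum>i\<in>UNIV. \<Sum>j\<in>UNIV. \<bar>M $ i $ j\<bar>)"

lemma matrix_l1_nonneg: "0 \<le> matrix_l1 M"
  unfolding matrix_l1_def by (intro sum_nonneg) auto

lemma row_l1_le_matrix_l1: "(\<Sum>j\<in>UNIV. \<bar>M $ i $ j\<bar>) \<le> matrix_l1 M"
  unfolding matrix_l1_def
  by (rule member_le_sum[where f = "\<lambda>i. \<Sum>j\<in>UNIV. \<bar>M $ i $ j\<bar>"]) (auto intro: sum_nonneg)

lemma norm_le_matrix_l1: "norm M \<le> matrix_l1 M"
proof -
  have "norm M \<le> (\<Sum>i\<in>UNIV. norm (M $ i))"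
    unfolding norm_vec_def by (simp add: L2_set_le_sum)
  also have "\<dots> \<le> matrix_l1 M"
    unfolding matrix_l1_def by (intro sum_mono) (simp add: norm_le_l1_cart)
  finally show ?thesis .
qed

lemma matrix_l1_mult_le: "matrix_l1 ((M::real^'n^'m) ** (N::real^'p^'n)) \<le> matrix_l1 M * matrix_l1 N"
proof -
  have "matrix_l1 (M ** N) \<le> (\<Sum>i\<in>UNIV. \<Sum>j\<in>UNIV. \<Sum>k\<in>UNIV. \<bar>M $ i $ k\<bar> * \<bar>N $ k $ j\<bar>)"
    unfolding matrix_l1_def matrix_matrix_mult_def
    by (auto intro!: sum_mono simp flip: abs_mult intro: sum_abs[THEN order_trans])
  also have "\<dots> = (\<Sum>i\<in>UNIV. \<Sum>k\<in>UNIV. \<bar>M $ i $ k\<bar> * (\<Sum>j\<in>UNIV. \<bar>N $ k $ j\<bar>))"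
    by (simp add: sum_distrib_left, subst sum.swap, rule refl)
  also have "\<dots> \<le> (\<Sum>i\<in>UNIV. \<Sum>k\<in>UNIV. \<bar>M $ i $ k\<bar> * matrix_l1 N)"
    by (intro sum_mono mult_left_mono row_l1_le_matrix_l1) auto
  also have "\<dots> = matrix_l1 M * matrix_l1 N"
    unfolding matrix_l1_def by (simp add: sum_distrib_right)
  finally show ?thesis .
qed

lemma matrix_l1_mpow_le: "matrix_l1 (mpow M k) \<le> matrix_l1 (mat 1 :: real^'n^'n) * matrix_l1 (M::real^'n^'n) ^ k"
proof (induction k)
  case (Suc k)
  have "matrix_l1 (mpow M (Suc k)) \<le> matrix_l1 M * matrix_l1 (mpow M k)"
    by (simp add: matrix_l1_mult_le)
  also have "\<dots> \<le> matrix_l1 M * (matrix_l1 (mat 1 :: real^'n^'n) * matrix_l1 M ^ k)"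
    by (rule mult_left_mono[OF Suc matrix_l1_nonneg])
  finally show ?case by (simp add: algebra_simps)
qed simp

lemma mpow_scaleR: "mpow (s *\<^sub>R M) k = s ^ k *\<^sub>R mpow M k"
  by (induction k) (simp_all add: matrix_scalar_ac flip: scalar_matrix_assoc)

lemma bounded_linear_matrix_entry: "bounded_linear (\<lambda>M::real^'n^'m. M $ i $ j)"
  by (rule bounded_linear_compose[OF bounded_linear_vec_nth bounded_linear_vec_nth])

lemma summable_norm_mexp_series:
  fixes N :: "real^'n^'n"
  shows "summable (\<lambda>k. norm ((1 / fact k) *\<^sub>R mpow N k))"
proof (rule summable_comparison_test)
  let ?c = "matrix_l1 (mat 1 :: real^'n^'n)"
  show "summable (\<lambda>k. ?c * (inverse (fact k) * matrix_l1 N ^ k))"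
    by (intro summable_mult summable_exp)
  show "\<exists>N0. \<forall>k\<ge>N0. norm (norm ((1 / fact k) *\<^sub>R mpow N k)) \<le> ?c * (inverse (fact k) * matrix_l1 N ^ k)"
    using order_trans[OF norm_le_matrix_l1 matrix_l1_mpow_le]
    by (auto intro!: exI[of _ 0] simp: divide_inverse mult_ac intro: mult_left_mono)
qed

lemma summable_mexp_entry_series:
  fixes N :: "real^'n^'n"
  shows "summable (\<lambda>k. (mpow N k $ i $ j / fact k) * s ^ k)"
proof -
  have "summable (\<lambda>k. ((1 / fact k) *\<^sub>R mpow (s *\<^sub>R N) k) $ i $ j)"
    using bounded_linear.summable[OF bounded_linear_matrix_entry summable_norm_cancel[OF summable_norm_mexp_series]] by simp
  then show ?thesis by (simp add: mpow_scaleR mult.commute)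
qed

lemma mexp_entry_powser:
  fixes N :: "real^'n^'n"
  shows "mexp (s *\<^sub>R N) $ i $ j = (\<Sum>k. (mpow N k $ i $ j / fact k) * s ^ k)"
proof -
  have "mexp (s *\<^sub>R N) $ i $ j = (\<Sum>k. ((1 / fact k) *\<^sub>R mpow (s *\<^sub>R N) k) $ i $ j)"
    unfolding mexp_def
    by (rule bounded_linear.suminf[OF bounded_linear_matrix_entry summable_norm_cancel[OF summable_norm_mexp_series]])
  then show ?thesis by (simp add: mpow_scaleR mult.commute)
qed

lemma mexp_entry_has_derivative:
  fixes N :: "real^'n^'n"
  shows "((\<lambda>s. mexp (s *\<^sub>R N) $ i $ j) has_real_derivative
           (\<Sum>k. diffs (\<lambda>k. mpow N k $ i $ j / fact k) k * s ^ k)) (at s)"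
  unfolding mexp_entry_powser
  by (rule termdiffs_strong_converges_everywhere[OF summable_mexp_entry_series])

lemma continuous_mexp_entry_derivative:
  fixes N :: "real^'n^'n"
  shows "continuous_on UNIV (\<lambda>s. \<Sum>k. diffs (\<lambda>k. mpow N k $ i $ j / fact k) k * s ^ k)"
  by (intro continuous_at_imp_continuous_on ballI isCont_powser_converges_everywhere
      termdiff_converges_all summable_mexp_entry_series)

lemma vector_matrix_mexp_C1:
  fixes N :: "real^'n^'n" and r :: "real^'n" and E :: "real^'p^'n"
  obtains \<Phi>' where "\<And>s. ((\<lambda>s. r v* (mexp (s *\<^sub>R N) ** E)) has_vector_derivative \<Phi>' s) (at s)"
    and "continuous_on UNIV \<Phi>'"
proof -
  define e' where "e' i q s = (\<Sum>k. diffs (\<lambda>k. mpow N k $ i $ q / fact k) k * s ^ k)" for i q s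
  have expand: "r v* (M ** E) = (\<Sum>i\<in>UNIV. \<Sum>q\<in>UNIV. (r $ i * M $ i $ q) *\<^sub>R E $ q)" for M :: "real^'n^'n"
    by (simp add: vec_eq_iff vector_matrix_mult_def matrix_matrix_mult_def sum_component
        sum_distrib_left mult_ac)
  show ?thesis
  proof (rule that)
    fix s
    show "((\<lambda>s. r v* (mexp (s *\<^sub>R N) ** E)) has_vector_derivative
            (\<Sum>i\<in>UNIV. \<Sum>q\<in>UNIV. (r $ i * e' i q s) *\<^sub>R E $ q)) (at s)"
    proof -
      have "((\<lambda>s. (r $ i * mexp (s *\<^sub>R N) $ i $ q) *\<^sub>R E $ q) has_vector_derivative
              (r $ i * e' i q s) *\<^sub>R E $ q) (at s)" for i q
        using has_vector_derivative_scaleR[OF DERIV_cmult[OF mexp_entry_has_derivative]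
            has_vector_derivative_const] by (simp add: e'_def)
      then show ?thesis
        unfolding expand by (intro has_vector_derivative_sum)
    qed
  next
    show "continuous_on UNIV (\<lambda>s. \<Sum>i\<in>UNIV. \<Sum>q\<in>UNIV. (r $ i * e' i q s) *\<^sub>R E $ q)"
      unfolding e'_def
      by (intro continuous_intros continuous_mexp_entry_derivative)
  qed
qed

lemma phi_C1:
  obtains \<Phi>' where "\<And>s. (phi D a g A B C K has_vector_derivative \<Phi>' s) (at s)"
    and "continuous_on UNIV \<Phi>'"
proof -
  have "phi D a g A B C K = (\<lambda>s. (\<chi> i. case i of Inl p \<Rightarrow> C $ p
                       | Inr p \<Rightarrow> (K - (1 / D) *\<^sub>R ((C \<bullet> B) *\<^sub>R C)) $ p) v*
        (mexp (s *\<^sub>R matN1 D a g A B C) **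
         ((\<chi> i j. case i of Inl p \<Rightarrow> (mat 1 :: real^2^2) $ p $ j | Inr p \<Rightarrow> 0) :: real^2^(2+2))))"
    by (simp add: fun_eq_iff phi_def Let_def)
  then show ?thesis
    using vector_matrix_mexp_C1 that by metis
qed

lemma Fterm_bound:
  obtains CF where "CF \<ge> 0"
    and "\<And>L x X. 0 \<le> x \<Longrightarrow> x \<le> L \<Longrightarrow> L \<le> lbar \<Longrightarrow> \<bar>Fterm D a g A B C K L x X\<bar> \<le> CF * norm X"
proof -
  obtain \<Phi>' where \<Phi>': "\<And>s. (phi D a g A B C K has_vector_derivative \<Phi>' s) (at s)"
    and cont_\<Phi>': "continuous_on UNIV \<Phi>'"
    using phi_C1 by blast
  define h where "h s = \<Phi>' s + ((1 / D) * (phi D a g A B C K s \<bullet> B)) *\<^sub>R C" for s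
  have cont_phi: "continuous_on UNIV (phi D a g A B C K)"
    using \<Phi>' by (meson continuous_at_imp_continuous_on has_vector_derivative_continuous)
  have "continuous_on {-lbar..0} h"
    unfolding h_def
    by (intro continuous_intros continuous_on_subset[OF cont_\<Phi>'] continuous_on_subset[OF cont_phi]) auto
  then have "bounded (h ` {-lbar..0})"
    by (intro compact_imp_bounded compact_continuous_image) auto
  then obtain CF where CF: "\<And>s. s \<in> {-lbar..0} \<Longrightarrow> norm (h s) \<le> CF"
    unfolding bounded_iff by blast
  show ?thesis
  proof (rule that[of "\<bar>CF\<bar>"])
    fix L x X assume "0 \<le> x" "x \<le> L" "L \<le> lbar"
    then have "norm (h (x - L)) \<le> \<bar>CF\<bar>"
      using CF[of "x - L"] by auto
    moreover have "Fterm D a g A B C K L x X = h (x - L) \<bullet> X"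
      by (simp add: Fterm_def kker_def h_def vector_derivative_at[OF \<Phi>'])
    ultimately show "\<bar>Fterm D a g A B C K L x X\<bar> \<le> \<bar>CF\<bar> * norm X"
      by (metis Cauchy_Schwarz_ineq2 mult_right_mono norm_ge_zero order_trans)
  qed simp
qed

section \<open>Differentiating integrals over a moving domain\<close>

lemma has_real_derivative_within_iff_approx:
  "(f has_real_derivative f') (at t within S) \<longleftrightarrow>
     (\<forall>e>0. \<exists>d>0. \<forall>s\<in>S. \<bar>s - t\<bar> < d \<longrightarrow> \<bar>f s - f t - (s - t) * f'\<bar> \<le> e * \<bar>s - t\<bar>)"
  by (simp add: has_field_derivative_def has_derivative_within_alt bounded_linear_mult_right mult.commute)

lemma has_real_derivative_within_localize:
  assumes "(f has_real_derivative f') (at t within S)" "d > 0" "\<And>s. s \<in> T \<Longrightarrow> \<bar>s - t\<bar> < d \<Longrightarrow> s \<in> S"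
  shows "(f has_real_derivative f') (at t within T)"
  unfolding has_real_derivative_within_iff_approx
proof (intro allI impI)
  fix e :: real assume "e > 0"
  then obtain d' where "d' > 0" "\<forall>s\<in>S. \<bar>s - t\<bar> < d' \<longrightarrow> \<bar>f s - f t - (s - t) * f'\<bar> \<le> e * \<bar>s - t\<bar>"
    using assms(1) unfolding has_real_derivative_within_iff_approx by blast
  then show "\<exists>d>0. \<forall>s\<in>T. \<bar>s - t\<bar> < d \<longrightarrow> \<bar>f s - f t - (s - t) * f'\<bar> \<le> e * \<bar>s - t\<bar>"
    using assms(2,3) by (intro exI[of _ "min d d'"]) auto
qed

lemma has_real_derivative_imp_local_lipschitz:
  assumes "(f has_real_derivative f') (at t within S)"
  obtains d where "d > 0" "\<And>s. s \<in> S \<Longrightarrow> \<bar>s - t\<bar> < d \<Longrightarrow> \<bar>f s - f t\<bar> \<le> (\<bar>f'\<bar> + 1) * \<bar>s - t\<bar>"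
proof -
  obtain d where d: "d > 0" "\<forall>s\<in>S. \<bar>s - t\<bar> < d \<longrightarrow> \<bar>f s - f t - (s - t) * f'\<bar> \<le> 1 * \<bar>s - t\<bar>"
    using assms unfolding has_real_derivative_within_iff_approx by (meson zero_less_one)
  have "\<bar>f s - f t\<bar> \<le> (\<bar>f'\<bar> + 1) * \<bar>s - t\<bar>" if "s \<in> S" "\<bar>s - t\<bar> < d" for s
  proof -
    have "\<bar>f s - f t\<bar> \<le> \<bar>f s - f t - (s - t) * f'\<bar> + \<bar>s - t\<bar> * \<bar>f'\<bar>"
      using abs_triangle_ineq[of "f s - f t - (s - t) * f'" "(s - t) * f'"] by (simp add: abs_mult)
    moreover have "\<bar>f s - f t - (s - t) * f'\<bar> \<le> \<bar>s - t\<bar>"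
      using d(2) that by simp
    moreover have "(\<bar>f'\<bar> + 1) * \<bar>s - t\<bar> = \<bar>s - t\<bar> * \<bar>f'\<bar> + \<bar>s - t\<bar>"
      by (simp add: algebra_simps)
    ultimately show ?thesis by linarith
  qed
  with d(1) show ?thesis using that by blast
qed

lemma at_within_Ici_nontrivial:
  assumes "0 \<le> (t::real)"
  shows "at t within {0..} \<noteq> bot"
proof -
  have "at t within {t<..} \<le> at t within {0..}"
    using assms by (intro at_le) auto
  then show ?thesis
    using trivial_limit_at_right_real[of t] by (auto simp: bot_unique)
qed

lemma increment_bound_by_derivative_oscillation:
  fixes g g' :: "real \<Rightarrow> real"
  assumes "\<And>r. r \<in> {min t s..max t s} \<Longrightarrow> (g has_real_derivative g' r) (at r within {min t s..max t s})"
    and "\<And>r. r \<in> {min t s..max t s} \<Longrightarrow> \<bar>g' r - g' t\<bar> \<le> e"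
  shows "\<bar>g s - g t - (s - t) * g' t\<bar> \<le> e * \<bar>s - t\<bar>"
proof -
  have deriv: "((\<lambda>r. g r - r * g' t) has_real_derivative g' r - 1 * g' t) (at r within {min t s..max t s})"
    if "r \<in> {min t s..max t s}" for r
    by (rule DERIV_diff[OF assms(1)[OF that] DERIV_cmult_right[OF DERIV_ident]])
  have "norm ((\<lambda>r. g r - r * g' t) s - (\<lambda>r. g r - r * g' t) t) \<le> e * norm (s - t)"
    by (rule field_differentiable_bound[OF _ deriv]) (use assms(2) in auto)
  then show ?thesis by (simp add: algebra_simps)
qed

lemma integral_close_to_const:
  fixes h :: "real \<Rightarrow> real"
  assumes "a \<le> b" "continuous_on {a..b} h" "\<And>y. y \<in> {a..b} \<Longrightarrow> \<bar>h y - c\<bar> \<le> e"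
  shows "\<bar>integral {a..b} h - (b - a) * c\<bar> \<le> e * (b - a)"
proof -
  have "integral {a..b} h - (b - a) * c = integral {a..b} (\<lambda>y. h y - c)"
    using assms(1)
    by (simp add: integral_diff[OF integrable_continuous_real[OF assms(2)] integrable_const_ivl] content_real)
  also have "norm \<dots> \<le> e * (b - a)"
    by (rule integral_bound) (use assms in \<open>auto intro: continuous_intros\<close>)
  finally show ?thesis by simp
qed

text \<open>Comparing integrals at two times over the intervals \<open>[x0, a]\<close> and \<open>[x0, b]\<close>: on the common part
  \<open>[x0, m]\<close> the integrands are compared through the time derivative, on the slivers above \<open>m\<close>
  with the constant \<open>c\<close>.\<close>

lemma integral_increment_split_bound:
  fixes u v v' :: "real \<Rightarrow> real"
  assumes m: "x0 \<le> m" "m \<le> a" "m \<le> b"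
    and cont: "continuous_on {x0..a} u" "continuous_on {x0..b} v" "continuous_on {x0..b} v'"
    and inner: "\<And>y. y \<in> {x0..m} \<Longrightarrow> \<bar>u y - v y - h * v' y\<bar> \<le> \<eta>"
    and edge: "\<And>y. y \<in> {m..a} \<Longrightarrow> \<bar>u y - c\<bar> \<le> e" "\<And>y. y \<in> {m..b} \<Longrightarrow> \<bar>v y - c\<bar> \<le> e"
      "\<And>y. y \<in> {m..b} \<Longrightarrow> \<bar>v' y\<bar> \<le> B"
  shows "\<bar>integral {x0..a} u - integral {x0..b} v - h * integral {x0..b} v' - (a - b) * c\<bar>
           \<le> \<eta> * (m - x0) + e * ((a - m) + (b - m)) + \<bar>h\<bar> * (B * (b - m))"
proof -
  have split: "integral {x0..z} w = integral {x0..m} w + integral {m..z} w"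
    if "m \<le> z" "continuous_on {x0..z} w" for w :: "real \<Rightarrow> real" and z
    using Henstock_Kurzweil_Integration.integral_combine[OF m(1) that(1) integrable_continuous_real[OF that(2)]] by simp
  have sub: "continuous_on {y..z} w" if "continuous_on {x0..b'} w" "x0 \<le> y" "z \<le> b'"
    for w :: "real \<Rightarrow> real" and y z b'
    using continuous_on_subset[OF that(1)] that(2,3) by auto
  have cont_inner: "continuous_on {x0..m} u" "continuous_on {x0..m} v" "continuous_on {x0..m} v'"
    using m by (auto intro: sub[OF cont(1)] sub[OF cont(2)] sub[OF cont(3)])
  have "norm (integral {x0..m} (\<lambda>y. u y - v y - h * v' y)) \<le> \<eta> * (m - x0)"
    by (rule integral_bound) (use inner m cont_inner in \<open>auto intro!: continuous_intros\<close>)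
  moreover have "integral {x0..m} (\<lambda>y. u y - v y - h * v' y)
      = integral {x0..m} u - integral {x0..m} v - h * integral {x0..m} v'"
    using cont_inner
    by (simp add: integral_diff integral_mult_right integrable_continuous_real continuous_intros)
  moreover have "\<bar>integral {m..a} u - (a - m) * c\<bar> \<le> e * (a - m)"
    using m by (intro integral_close_to_const edge sub[OF cont(1)]) auto
  moreover have "\<bar>integral {m..b} v - (b - m) * c\<bar> \<le> e * (b - m)"
    using m by (intro integral_close_to_const edge sub[OF cont(2)]) auto
  moreover have "norm (integral {m..b} v') \<le> B * (b - m)"
    by (rule integral_bound) (use m edge(3) in \<open>auto intro: sub[OF cont(3)]\<close>)
  then have "\<bar>h * integral {m..b} v'\<bar> \<le> \<bar>h\<bar> * (B * (b - m))"
    by (simp add: abs_mult mult_left_mono)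
  ultimately show ?thesis
    unfolding split[OF m(2) cont(1)] split[OF m(3) cont(2)] split[OF m(3) cont(3)]
    by (simp add: abs_le_iff algebra_simps)
qed

locale moving_domain =
  fixes l :: "real \<Rightarrow> real"
  assumes continuous_boundary: "continuous_on {0..} l"
begin

definition domain :: "(real \<times> real) set" where
  "domain = {(x, s). 0 \<le> s \<and> 0 \<le> x \<and> x \<le> l s}"

lemma closed_domain: "closed domain"
proof -
  have "closed ({p. 0 \<le> snd p} \<inter> (\<lambda>p. fst p - l (snd p)) -` {..0})"
    by (intro continuous_closed_preimage continuous_intros closed_Collect_le
        continuous_on_compose2[OF continuous_boundary]) auto
  moreover have "domain = ({p. 0 \<le> snd p} \<inter> (\<lambda>p. fst p - l (snd p)) -` {..0}) \<inter> {p. 0 \<le> fst p}"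
    unfolding domain_def by auto
  ultimately show ?thesis
    by (simp add: closed_Int closed_Collect_le continuous_on_fst continuous_on_const)
qed

lemma continuous_on_slice:
  assumes "continuous_on domain (\<lambda>(x, s). f x s)" "0 \<le> s" "0 \<le> a" "b \<le> l s"
  shows "continuous_on {a..b} (\<lambda>y. f y s)"
proof -
  have "(\<lambda>y. (y, s)) ` {a..b} \<subseteq> domain"
    using assms(2-4) unfolding domain_def by auto
  then show ?thesis
    using continuous_on_compose[OF continuous_on_Pair[OF continuous_on_id continuous_on_const]
        continuous_on_subset[OF assms(1)]] by (simp add: o_def)
qed

lemma boundary_stays_above:
  assumes "0 \<le> t" "x0 < l t"
  obtains d where "d > 0" "\<And>s. s \<in> {0..} \<Longrightarrow> \<bar>s - t\<bar> < d \<Longrightarrow> x0 < l s"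
proof -
  obtain d where "d > 0" "\<forall>s\<in>{0..}. dist s t < d \<longrightarrow> dist (l s) (l t) < l t - x0"
    using continuous_boundary assms unfolding continuous_on_iff by (metis atLeast_iff diff_gt_0_iff_gt)
  then show ?thesis
    using that by (fastforce simp: dist_real_def)
qed

lemma time_increment_uniform:
  assumes t: "0 \<le> t" and e: "e > 0"
    and ft_cont: "continuous_on domain (\<lambda>(x, s). ft x s)"
    and f_deriv: "\<And>x s. (x, s) \<in> domain \<Longrightarrow>
          ((\<lambda>r. f x r) has_real_derivative ft x s) (at s within {r. 0 \<le> r \<and> x \<le> l r})"
  obtains d where "d > 0"
    and "\<And>s y. 0 \<le> s \<Longrightarrow> \<bar>s - t\<bar> < d \<Longrightarrow> 0 \<le> y \<Longrightarrow> (\<And>r. r \<in> {min t s..max t s} \<Longrightarrow> y \<le> l r) \<Longrightarrow>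
           \<bar>f y s - f y t - (s - t) * ft y t\<bar> \<le> e * \<bar>s - t\<bar>"
proof -
  define K where "K = domain \<inter> cbox (0, 0) (l t + 1, t + 1)"
  have "compact K"
    unfolding K_def by (intro closed_Int_compact closed_domain compact_cbox)
  then obtain d1 where d1: "d1 > 0"
    "\<forall>p\<in>K. \<forall>q\<in>K. dist q p < d1 \<longrightarrow> dist ((\<lambda>(x, s). ft x s) q) ((\<lambda>(x, s). ft x s) p) < e"
    using compact_uniformly_continuous[OF continuous_on_subset[OF ft_cont] \<open>compact K\<close>] e
    unfolding uniformly_continuous_on_def K_def by (metis Int_lower1)
  obtain d0 where d0: "d0 > 0" "\<forall>r\<in>{0..}. dist r t < d0 \<longrightarrow> dist (l r) (l t) < 1"
    using continuous_boundary t unfolding continuous_on_iff by (metis atLeast_iff zero_less_one)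
  show ?thesis
  proof (rule that[of "min 1 (min d0 d1)"])
    fix s y assume s: "0 \<le> s" "\<bar>s - t\<bar> < min 1 (min d0 d1)" and y: "0 \<le> y"
      and below: "\<And>r. r \<in> {min t s..max t s} \<Longrightarrow> y \<le> l r"
    have r_near: "0 \<le> r \<and> \<bar>r - t\<bar> \<le> \<bar>s - t\<bar>" if "r \<in> {min t s..max t s}" for r
      using that s t by auto
    have in_K: "(y, r) \<in> K" if "r \<in> {min t s..max t s}" for r
    proof -
      have "\<bar>l r - l t\<bar> < 1"
        using d0(2) r_near[OF that] s by (simp add: dist_real_def)
      then show ?thesis
        using r_near[OF that] below[OF that] y s unfolding K_def domain_def by (auto simp: cbox_Pair_iff)
    qed
    show "\<bar>f y s - f y t - (s - t) * ft y t\<bar> \<le> e * \<bar>s - t\<bar>"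
    proof (rule increment_bound_by_derivative_oscillation)
      fix r assume r: "r \<in> {min t s..max t s}"
      have "{min t s..max t s} \<subseteq> {r. 0 \<le> r \<and> y \<le> l r}"
        using r_near below by auto
      moreover have "(y, r) \<in> domain"
        using in_K[OF r] unfolding K_def by blast
      ultimately show "((\<lambda>r. f y r) has_real_derivative ft y r) (at r within {min t s..max t s})"
        using DERIV_subset f_deriv by blast
      have "dist (y, r) (y, t) < d1"
        using r_near[OF r] s by (simp add: dist_Pair_Pair dist_real_def)
      then show "\<bar>ft y r - ft y t\<bar> \<le> e"
        using d1(2) in_K[OF r] in_K[of t] by (fastforce simp: dist_real_def)
    qed
  qed (use d0 d1 in simp)
qed

text \<open>The common part used for times \<open>t\<close> and \<open>s\<close> ends at the minimum \<open>m\<close> of \<open>l\<close> between them.\<close>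

lemma segment_minimum_near:
  assumes l_deriv: "(l has_real_derivative l') (at t within {0..})" and t: "0 \<le> t" and x0: "x0 < l t"
  obtains d where "d > 0" and "\<And>s. s \<in> {0..} \<Longrightarrow> \<bar>s - t\<bar> < d \<Longrightarrow> \<exists>m. x0 < m \<and>
      (\<forall>r\<in>{min t s..max t s}. m \<le> l r) \<and> l t - m \<le> (\<bar>l'\<bar> + 1) * \<bar>s - t\<bar> \<and>
      \<bar>l s - l t\<bar> \<le> (\<bar>l'\<bar> + 1) * \<bar>s - t\<bar>"
proof -
  define c where "c = \<bar>l'\<bar> + 1"
  obtain d where d: "d > 0" "\<And>s. s \<in> {0..} \<Longrightarrow> \<bar>s - t\<bar> < d \<Longrightarrow> \<bar>l s - l t\<bar> \<le> c * \<bar>s - t\<bar>"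
    using has_real_derivative_imp_local_lipschitz[OF l_deriv] unfolding c_def by blast
  have c: "1 \<le> c"
    unfolding c_def by simp
  show ?thesis
  proof (rule that[of "min d ((l t - x0) / c)"])
    show "0 < min d ((l t - x0) / c)"
      using d(1) x0 c by simp
    fix s assume s: "s \<in> {0..}" "\<bar>s - t\<bar> < min d ((l t - x0) / c)"
    define I where "I = {min t s..max t s}"
    have r_I: "r \<in> {0..} \<and> \<bar>r - t\<bar> \<le> \<bar>s - t\<bar>" if "r \<in> I" for r
      using that s t unfolding I_def by auto
    have l_I: "\<bar>l r - l t\<bar> \<le> c * \<bar>s - t\<bar>" if "r \<in> I" for r
    proof -
      have "\<bar>l r - l t\<bar> \<le> c * \<bar>r - t\<bar>"
        using d(2)[of r] r_I[OF that] s(2) by simp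
      also have "\<dots> \<le> c * \<bar>s - t\<bar>"
        using r_I[OF that] c by (intro mult_left_mono) auto
      finally show ?thesis .
    qed
    have "continuous_on I l"
      using continuous_on_subset[OF continuous_boundary] r_I by blast
    then obtain rm where rm: "rm \<in> I" "\<And>r. r \<in> I \<Longrightarrow> l rm \<le> l r"
      using continuous_attains_inf[of I l] unfolding I_def by fastforce
    have "c * \<bar>s - t\<bar> < l t - x0"
      using s(2) c by (simp add: pos_less_divide_eq mult.commute)
    then show "\<exists>m. x0 < m \<and> (\<forall>r\<in>{min t s..max t s}. m \<le> l r) \<and> l t - m \<le> (\<bar>l'\<bar> + 1) * \<bar>s - t\<bar> \<and>
        \<bar>l s - l t\<bar> \<le> (\<bar>l'\<bar> + 1) * \<bar>s - t\<bar>"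
      using rm l_I[OF rm(1)] l_I[of s] unfolding I_def c_def by (intro exI[of _ "l rm"]) (auto simp: abs_le_iff)
  qed
qed

lemma increment_error_terms_le:
  fixes \<epsilon> c B L m x0 a h :: real
  assumes \<epsilon>: "0 < \<epsilon>" and c: "1 \<le> c" and B: "0 \<le> B" and m: "0 \<le> x0" "x0 \<le> m" "m \<le> L"
    and near: "L - m \<le> c * \<bar>h\<bar>" "\<bar>a - L\<bar> \<le> c * \<bar>h\<bar>" and small: "(c * B + 1) * \<bar>h\<bar> \<le> \<epsilon> / 3"
  shows "\<epsilon> / (3 * (L + 1)) * \<bar>h\<bar> * (m - x0) + \<epsilon> / (9 * c) * ((a - m) + (L - m))
    + \<bar>h\<bar> * (B * (L - m)) \<le> \<epsilon> * \<bar>h\<bar>"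
proof -
  have "(m - x0) / (L + 1) \<le> 1"
    using m by simp
  from mult_left_le[OF this, of "\<epsilon> / 3 * \<bar>h\<bar>"] \<epsilon>
  have "\<epsilon> / (3 * (L + 1)) * \<bar>h\<bar> * (m - x0) \<le> \<epsilon> / 3 * \<bar>h\<bar>"
    by (simp add: field_simps)
  moreover have "\<epsilon> / (9 * c) * ((a - m) + (L - m)) \<le> \<epsilon> / (9 * c) * (3 * c * \<bar>h\<bar>)"
    using near \<epsilon> c by (intro mult_left_mono) (auto simp: abs_le_iff)
  then have "\<epsilon> / (9 * c) * ((a - m) + (L - m)) \<le> \<epsilon> / 3 * \<bar>h\<bar>"
    using c by (simp add: field_simps)
  moreover have "B * (L - m) \<le> (c * B + 1) * \<bar>h\<bar>"
    using mult_left_mono[OF near(1) B] by (simp add: algebra_simps)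
  then have "\<bar>h\<bar> * (B * (L - m)) \<le> \<bar>h\<bar> * (\<epsilon> / 3)"
    using small by (intro mult_left_mono) auto
  moreover have "\<epsilon> / 3 * \<bar>h\<bar> + \<epsilon> / 3 * \<bar>h\<bar> + \<bar>h\<bar> * (\<epsilon> / 3) = \<epsilon> * \<bar>h\<bar>"
    by simp
  ultimately show ?thesis
    by linarith
qed

lemma integral_increment_approx:
  assumes l_deriv: "(l has_real_derivative l') (at t within {0..})" and t: "0 \<le> t"
    and x0: "0 \<le> x0" "x0 < l t"
    and f_cont: "continuous_on domain (\<lambda>(x, s). f x s)"
    and ft_cont: "continuous_on domain (\<lambda>(x, s). ft x s)"
    and f_deriv: "\<And>x s. (x, s) \<in> domain \<Longrightarrow>
          ((\<lambda>r. f x r) has_real_derivative ft x s) (at s within {r. 0 \<le> r \<and> x \<le> l r})"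
    and \<epsilon>: "\<epsilon> > 0"
  obtains \<delta> where "\<delta> > 0" and "\<And>s. s \<in> {0..} \<Longrightarrow> \<bar>s - t\<bar> < \<delta> \<Longrightarrow>
    \<bar>integral {x0..l s} (\<lambda>y. f y s) - integral {x0..l t} (\<lambda>y. f y t)
      - (s - t) * integral {x0..l t} (\<lambda>y. ft y t) - (l s - l t) * f (l t) t\<bar> \<le> \<epsilon> * \<bar>s - t\<bar>"
proof -
  define L where "L = l t"
  define c where "c = \<bar>l'\<bar> + 1"
  have L: "0 < L + 1" and c: "1 \<le> c"
    using x0 unfolding L_def c_def by auto
  have "continuous_on {x0..L} (\<lambda>y. ft y t)"
    using continuous_on_slice[OF ft_cont t x0(1)] by (simp add: L_def)
  then have "bounded ((\<lambda>y. ft y t) ` {x0..L})"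
    by (intro compact_imp_bounded compact_continuous_image) auto
  then obtain B where B: "\<And>y. y \<in> {x0..L} \<Longrightarrow> \<bar>ft y t\<bar> \<le> B"
    unfolding bounded_iff by (metis image_eqI real_norm_def)
  have B0: "0 \<le> B"
    using B[of L] x0 L_def by fastforce
  obtain d1 where d1: "d1 > 0" and inner: "\<And>s y. 0 \<le> s \<Longrightarrow> \<bar>s - t\<bar> < d1 \<Longrightarrow> 0 \<le> y \<Longrightarrow>
      (\<And>r. r \<in> {min t s..max t s} \<Longrightarrow> y \<le> l r) \<Longrightarrow>
      \<bar>f y s - f y t - (s - t) * ft y t\<bar> \<le> \<epsilon> / (3 * (L + 1)) * \<bar>s - t\<bar>"
    using time_increment_uniform[OF t _ ft_cont f_deriv, of "\<epsilon> / (3 * (L + 1))"] \<epsilon> L by auto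
  have "(L, t) \<in> domain"
    using t x0 unfolding domain_def L_def by auto
  then obtain d2 where d2: "d2 > 0"
    "\<forall>q\<in>domain. dist q (L, t) < d2 \<longrightarrow> dist ((\<lambda>(x, s). f x s) q) (f L t) < \<epsilon> / (9 * c)"
    using f_cont[unfolded continuous_on_iff, rule_format, of "(L, t)" "\<epsilon> / (9 * c)"] \<epsilon> c by auto
  obtain d3 where d3: "d3 > 0" "\<And>s. s \<in> {0..} \<Longrightarrow> \<bar>s - t\<bar> < d3 \<Longrightarrow> \<exists>m. x0 < m \<and>
      (\<forall>r\<in>{min t s..max t s}. m \<le> l r) \<and> L - m \<le> c * \<bar>s - t\<bar> \<and> \<bar>l s - L\<bar> \<le> c * \<bar>s - t\<bar>"
    using segment_minimum_near[OF l_deriv t x0(2)] unfolding L_def c_def by blast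
  define \<delta> where "\<delta> = min d1 (min (d2 / (c + 1)) (min d3 (\<epsilon> / (3 * (c * B + 1)))))"
  have cB: "0 < c * B + 1"
    using B0 c by (simp add: add_nonneg_pos)
  have \<delta>_le: "\<delta> \<le> d1" "\<delta> \<le> d2 / (c + 1)" "\<delta> \<le> d3" "\<delta> \<le> \<epsilon> / (3 * (c * B + 1))"
    unfolding \<delta>_def by auto
  show ?thesis
  proof (rule that[of \<delta>])
    show "\<delta> > 0"
      unfolding \<delta>_def using d1 d2 d3 c \<epsilon> cB by auto
    fix s assume s: "s \<in> {0..}" "\<bar>s - t\<bar> < \<delta>"
    then obtain m where m: "x0 < m" "\<And>r. r \<in> {min t s..max t s} \<Longrightarrow> m \<le> l r"
      "L - m \<le> c * \<bar>s - t\<bar>" "\<bar>l s - L\<bar> \<le> c * \<bar>s - t\<bar>"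
      using d3(2)[of s] unfolding \<delta>_def by auto
    have m_le: "m \<le> L" "m \<le> l s"
      using m(2)[of t] m(2)[of s] unfolding L_def by auto
    have near: "\<bar>f y r - f L t\<bar> \<le> \<epsilon> / (9 * c)"
      if "(y, r) \<in> domain" "\<bar>y - L\<bar> \<le> c * \<bar>s - t\<bar>" "\<bar>r - t\<bar> \<le> \<bar>s - t\<bar>" for y r
    proof -
      have "dist (y, r) (L, t) \<le> \<bar>y - L\<bar> + \<bar>r - t\<bar>"
        using norm_Pair_le[of "y - L" "r - t"] by (simp add: dist_norm)
      also have "\<dots> \<le> (c + 1) * \<bar>s - t\<bar>"
        using that(2,3) by (simp add: algebra_simps)
      also have "\<dots> < (c + 1) * \<delta>"
        using s(2) c by simp
      also have "\<dots> \<le> d2"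
        using c \<delta>_le(2) by (simp add: pos_le_divide_eq mult.commute)
      finally show ?thesis
        using d2(2) that(1) by (fastforce simp: dist_real_def)
    qed
    have split: "\<bar>integral {x0..l s} (\<lambda>y. f y s) - integral {x0..L} (\<lambda>y. f y t)
        - (s - t) * integral {x0..L} (\<lambda>y. ft y t) - (l s - L) * f L t\<bar>
        \<le> \<epsilon> / (3 * (L + 1)) * \<bar>s - t\<bar> * (m - x0) + \<epsilon> / (9 * c) * ((l s - m) + (L - m))
          + \<bar>s - t\<bar> * (B * (L - m))"
    proof (rule integral_increment_split_bound)
      show "x0 \<le> m" "m \<le> l s" "m \<le> L"
        using m m_le by auto
      show "continuous_on {x0..l s} (\<lambda>y. f y s)" "continuous_on {x0..L} (\<lambda>y. f y t)"
        "continuous_on {x0..L} (\<lambda>y. ft y t)"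
        using continuous_on_slice[OF f_cont] continuous_on_slice[OF ft_cont] s t x0 L_def by auto
    next
      fix y assume "y \<in> {x0..m}"
      then show "\<bar>f y s - f y t - (s - t) * ft y t\<bar> \<le> \<epsilon> / (3 * (L + 1)) * \<bar>s - t\<bar>"
        using inner[of s y] m(2) s x0 unfolding \<delta>_def by fastforce
    next
      fix y assume "y \<in> {m..l s}"
      then show "\<bar>f y s - f L t\<bar> \<le> \<epsilon> / (9 * c)"
        using near[of y s] m s x0 unfolding domain_def by (auto simp: abs_le_iff)
    next
      fix y assume "y \<in> {m..L}"
      then show "\<bar>f y t - f L t\<bar> \<le> \<epsilon> / (9 * c)" "\<bar>ft y t\<bar> \<le> B"
        using near[of y t] B[of y] m t x0 unfolding domain_def L_def by (auto simp: abs_le_iff)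
    qed
    have "(c * B + 1) * \<bar>s - t\<bar> \<le> (c * B + 1) * \<delta>"
      using s(2) cB by (intro mult_left_mono) auto
    also have "\<dots> \<le> \<epsilon> / 3"
      using \<delta>_le(4) cB by (simp add: pos_le_divide_eq algebra_simps)
    finally have "\<epsilon> / (3 * (L + 1)) * \<bar>s - t\<bar> * (m - x0) + \<epsilon> / (9 * c) * ((l s - m) + (L - m))
        + \<bar>s - t\<bar> * (B * (L - m)) \<le> \<epsilon> * \<bar>s - t\<bar>"
      using m m_le x0 \<epsilon> c B0 by (intro increment_error_terms_le) auto
    with split show "\<bar>integral {x0..l s} (\<lambda>y. f y s) - integral {x0..l t} (\<lambda>y. f y t)
        - (s - t) * integral {x0..l t} (\<lambda>y. ft y t) - (l s - l t) * f (l t) t\<bar> \<le> \<epsilon> * \<bar>s - t\<bar>"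
      unfolding L_def by linarith
  qed
qed

lemma leibniz_rule:
  assumes l_deriv: "(l has_real_derivative l') (at t within {0..})" and t: "0 \<le> t"
    and x0: "0 \<le> x0" "x0 < l t"
    and f_cont: "continuous_on domain (\<lambda>(x, s). f x s)"
    and ft_cont: "continuous_on domain (\<lambda>(x, s). ft x s)"
    and f_deriv: "\<And>x s. (x, s) \<in> domain \<Longrightarrow>
          ((\<lambda>r. f x r) has_real_derivative ft x s) (at s within {r. 0 \<le> r \<and> x \<le> l r})"
  shows "((\<lambda>s. integral {x0..l s} (\<lambda>y. f y s)) has_real_derivative
           l' * f (l t) t + integral {x0..l t} (\<lambda>y. ft y t)) (at t within {0..})"
  unfolding has_real_derivative_within_iff_approx
proof (intro allI impI)
  fix \<epsilon> :: real assume "\<epsilon> > 0"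
  then obtain \<delta> where \<delta>: "\<delta> > 0" "\<And>s. s \<in> {0..} \<Longrightarrow> \<bar>s - t\<bar> < \<delta> \<Longrightarrow>
      \<bar>integral {x0..l s} (\<lambda>y. f y s) - integral {x0..l t} (\<lambda>y. f y t)
        - (s - t) * integral {x0..l t} (\<lambda>y. ft y t) - (l s - l t) * f (l t) t\<bar> \<le> \<epsilon> / 2 * \<bar>s - t\<bar>"
    using integral_increment_approx[OF l_deriv t x0 f_cont ft_cont f_deriv, of "\<epsilon> / 2"] by auto
  obtain d where d: "d > 0" "\<forall>s\<in>{0..}. \<bar>s - t\<bar> < d \<longrightarrow>
      \<bar>l s - l t - (s - t) * l'\<bar> \<le> \<epsilon> / (2 * (\<bar>f (l t) t\<bar> + 1)) * \<bar>s - t\<bar>"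
    using l_deriv[unfolded has_real_derivative_within_iff_approx, rule_format,
        of "\<epsilon> / (2 * (\<bar>f (l t) t\<bar> + 1))"] \<open>\<epsilon> > 0\<close>
    by (auto simp: add_nonneg_pos)
  have boundary: "\<bar>(l s - l t - (s - t) * l') * f (l t) t\<bar> \<le> \<epsilon> / 2 * \<bar>s - t\<bar>"
    if "s \<in> {0..}" "\<bar>s - t\<bar> < d" for s
  proof -
    have "\<bar>(l s - l t - (s - t) * l') * f (l t) t\<bar>
        \<le> \<epsilon> / (2 * (\<bar>f (l t) t\<bar> + 1)) * \<bar>s - t\<bar> * (\<bar>f (l t) t\<bar> + 1)"
      unfolding abs_mult using d(2) that by (intro mult_mono) auto
    also have "\<dots> = \<epsilon> / 2 * \<bar>s - t\<bar>"
      by (simp add: field_simps add_nonneg_pos)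
    finally show ?thesis .
  qed
  show "\<exists>d>0. \<forall>s\<in>{0..}. \<bar>s - t\<bar> < d \<longrightarrow> \<bar>integral {x0..l s} (\<lambda>y. f y s) - integral {x0..l t} (\<lambda>y. f y t)
      - (s - t) * (l' * f (l t) t + integral {x0..l t} (\<lambda>y. ft y t))\<bar> \<le> \<epsilon> * \<bar>s - t\<bar>"
  proof (intro exI[of _ "min \<delta> d"] conjI ballI impI)
    fix s assume s: "s \<in> {0..}" "\<bar>s - t\<bar> < min \<delta> d"
    define X where "X = integral {x0..l s} (\<lambda>y. f y s) - integral {x0..l t} (\<lambda>y. f y t)
      - (s - t) * integral {x0..l t} (\<lambda>y. ft y t) - (l s - l t) * f (l t) t"
    define Y where "Y = (l s - l t - (s - t) * l') * f (l t) t"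
    have "integral {x0..l s} (\<lambda>y. f y s) - integral {x0..l t} (\<lambda>y. f y t)
      - (s - t) * (l' * f (l t) t + integral {x0..l t} (\<lambda>y. ft y t)) = X + Y"
      unfolding X_def Y_def by (simp add: algebra_simps)
    moreover have "\<bar>X\<bar> \<le> \<epsilon> / 2 * \<bar>s - t\<bar>" "\<bar>Y\<bar> \<le> \<epsilon> / 2 * \<bar>s - t\<bar>"
      unfolding X_def Y_def using \<delta>(2)[of s] boundary[of s] s by auto
    ultimately show "\<bar>integral {x0..l s} (\<lambda>y. f y s) - integral {x0..l t} (\<lambda>y. f y t)
      - (s - t) * (l' * f (l t) t + integral {x0..l t} (\<lambda>y. ft y t))\<bar> \<le> \<epsilon> * \<bar>s - t\<bar>"
      using abs_triangle_ineq[of X Y] by linarith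
  qed (use \<delta> d in auto)
qed

end

section \<open>Energy estimates for a Robin--Dirichlet profile\<close>

lemma integral_eq_diff_real:
  fixes f f' :: "real \<Rightarrow> real"
  assumes "a \<le> b" "\<And>x. x \<in> {a..b} \<Longrightarrow> (f has_real_derivative f' x) (at x within {a..b})"
  shows "integral {a..b} f' = f b - f a"
  using fundamental_theorem_of_calculus[OF assms(1), of f f'] assms(2)
  by (simp add: has_real_derivative_iff_has_vector_derivative integral_unique)

lemma integral_le_open_interval:
  fixes f g :: "real \<Rightarrow> real"
  assumes "continuous_on {a..b} f" "continuous_on {a..b} g" "\<And>x. a < x \<Longrightarrow> x < b \<Longrightarrow> f x \<le> g x"
  shows "integral {a..b} f \<le> integral {a..b} g"
proof -
  have "f integrable_on {a<..<b}" "g integrable_on {a<..<b}"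
    using assms(1,2) integrable_continuous_real integrable_on_open_interval_real by blast+
  then have "integral {a<..<b} f \<le> integral {a<..<b} g"
    by (rule integral_le) (use assms(3) in auto)
  then show ?thesis by (simp add: integral_open_interval_real)
qed

lemma integral_square_nonneg: "0 \<le> integral S (\<lambda>x. (h x)\<^sup>2 :: real)"
  by (cases "(\<lambda>x. (h x)\<^sup>2) integrable_on S") (simp_all add: integral_nonneg not_integrable_integral)

lemma mult_le_half_squares_if_abs_le:
  fixes v r \<kappa> \<xi> :: real
  assumes "\<bar>r\<bar> \<le> \<kappa> * \<xi>" "0 \<le> \<kappa>"
  shows "v * r \<le> \<kappa> / 2 * (v\<^sup>2 + \<xi>\<^sup>2)"
proof -
  have "v * r \<le> \<bar>v\<bar> * (\<kappa> * \<xi>)"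
    using mult_left_mono[OF assms(1), of "\<bar>v\<bar>"] by (simp add: abs_mult[symmetric])
  moreover have "2 * (\<bar>v\<bar> * \<xi>) \<le> v\<^sup>2 + \<xi>\<^sup>2"
    using sum_squares_bound[of "\<bar>v\<bar>" \<xi>] by (simp add: power2_eq_square)
  then have "\<kappa> * (2 * (\<bar>v\<bar> * \<xi>)) \<le> \<kappa> * (v\<^sup>2 + \<xi>\<^sup>2)"
    by (rule mult_left_mono[OF _ assms(2)])
  ultimately show ?thesis
    by (simp add: algebra_simps)
qed

lemma mult_le_weighted_squares:
  fixes a p q D :: real
  assumes "0 < D"
  shows "a * (p * q) \<le> D / 4 * p\<^sup>2 + a\<^sup>2 / D * q\<^sup>2"
proof -
  have "0 \<le> (D / 2 * p - a * q)\<^sup>2 / D"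
    using assms by simp
  also have "\<dots> = D / 4 * p\<^sup>2 + a\<^sup>2 / D * q\<^sup>2 - a * (p * q)"
    using assms by (simp add: power2_eq_square field_simps)
  finally show ?thesis by simp
qed

locale robin_profile =
  fixes L \<gamma> :: real and u ux uxx :: "real \<Rightarrow> real"
  assumes length_pos: "0 < L"
    and continuous_u: "continuous_on {0..L} u"
    and continuous_ux: "continuous_on {0..L} ux"
    and continuous_uxx: "continuous_on {0..L} uxx"
    and u_deriv: "\<And>y. y \<in> {0..L} \<Longrightarrow> (u has_real_derivative ux y) (at y within {0..L})"
    and ux_deriv: "\<And>y. y \<in> {0..L} \<Longrightarrow> (ux has_real_derivative uxx y) (at y within {0..L})"
    and robin: "ux 0 = \<gamma> * u 0"
    and dirichlet: "u L = 0"
begin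

lemma has_integral_u_ux: "((\<lambda>y. u y * ux y) has_integral - (u 0)\<^sup>2 / 2) {0..L}"
proof -
  have "integral {0..L} (\<lambda>y. u y * ux y) = (u L)\<^sup>2 / 2 - (u 0)\<^sup>2 / 2"
    using length_pos
    by (intro integral_eq_diff_real) (auto intro!: derivative_eq_intros u_deriv simp: power2_eq_square)
  then show ?thesis
    using integrable_continuous_real[OF continuous_on_mult[OF continuous_u continuous_ux]] dirichlet
    by (simp add: has_integral_integral)
qed

lemma has_integral_u_uxx:
  "((\<lambda>y. u y * uxx y) has_integral - \<gamma> * (u 0)\<^sup>2 - integral {0..L} (\<lambda>y. (ux y)\<^sup>2)) {0..L}"
proof -
  have "integral {0..L} (\<lambda>y. (ux y)\<^sup>2 + u y * uxx y) = u L * ux L - u 0 * ux 0"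
    using length_pos
    by (intro integral_eq_diff_real) (auto intro!: derivative_eq_intros u_deriv ux_deriv simp: power2_eq_square)
  moreover have "integral {0..L} (\<lambda>y. (ux y)\<^sup>2 + u y * uxx y)
      = integral {0..L} (\<lambda>y. (ux y)\<^sup>2) + integral {0..L} (\<lambda>y. u y * uxx y)"
    by (intro integral_add integrable_continuous_real continuous_intros continuous_u continuous_ux continuous_uxx)
  ultimately have "integral {0..L} (\<lambda>y. u y * uxx y) = - \<gamma> * (u 0)\<^sup>2 - integral {0..L} (\<lambda>y. (ux y)\<^sup>2)"
    using robin dirichlet by (simp add: power2_eq_square algebra_simps)
  then show ?thesis
    using integrable_integral[OF integrable_continuous_real[OF continuous_on_mult[OF continuous_u continuous_uxx]]]
    by simp
qed

lemma boundary_gradient_sq: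
  "(ux L)\<^sup>2 = \<gamma>\<^sup>2 * (u 0)\<^sup>2 + 2 * integral {0..L} (\<lambda>y. ux y * uxx y)"
proof -
  have "integral {0..L} (\<lambda>y. ux y * uxx y) = (ux L)\<^sup>2 / 2 - (ux 0)\<^sup>2 / 2"
    using length_pos
    by (intro integral_eq_diff_real) (auto intro!: derivative_eq_intros ux_deriv simp: power2_eq_square)
  then show ?thesis
    using robin by (simp add: power_mult_distrib)
qed

lemma boundary_gradient_sq_le:
  "(ux L)\<^sup>2 \<le> \<gamma>\<^sup>2 * (u 0)\<^sup>2 + integral {0..L} (\<lambda>y. (ux y)\<^sup>2) + integral {0..L} (\<lambda>y. (uxx y)\<^sup>2)"
proof -
  have "2 * integral {0..L} (\<lambda>y. ux y * uxx y) \<le> integral {0..L} (\<lambda>y. (ux y)\<^sup>2 + (uxx y)\<^sup>2)"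
  proof -
    have "integral {0..L} (\<lambda>y. 2 * (ux y * uxx y)) \<le> integral {0..L} (\<lambda>y. (ux y)\<^sup>2 + (uxx y)\<^sup>2)"
      by (intro integral_le_open_interval continuous_intros continuous_ux continuous_uxx)
         (metis mult.assoc sum_squares_bound)
    then show ?thesis by simp
  qed
  also have "\<dots> = integral {0..L} (\<lambda>y. (ux y)\<^sup>2) + integral {0..L} (\<lambda>y. (uxx y)\<^sup>2)"
    by (intro integral_add integrable_continuous_real continuous_intros continuous_ux continuous_uxx)
  finally show ?thesis
    using boundary_gradient_sq by linarith
qed

lemma energy_estimate_L2:
  assumes ut_cont: "continuous_on {0..L} ut" and \<kappa>: "0 \<le> \<kappa>"
    and perturbed: "\<And>y. 0 < y \<Longrightarrow> y < L \<Longrightarrow> \<bar>ut y - (D * uxx y - a * ux y - g * u y)\<bar> \<le> \<kappa> * \<xi>"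
  shows "integral {0..L} (\<lambda>y. u y * ut y)
    \<le> - (D * \<gamma> - a / 2) * (u 0)\<^sup>2 - D * integral {0..L} (\<lambda>y. (ux y)\<^sup>2) - g * integral {0..L} (\<lambda>y. (u y)\<^sup>2)
       + \<kappa> / 2 * (integral {0..L} (\<lambda>y. (u y)\<^sup>2) + L * \<xi>\<^sup>2)"
proof -
  let ?R = "\<lambda>y. D * (u y * uxx y) - a * (u y * ux y) - g * (u y)\<^sup>2 + \<kappa> / 2 * ((u y)\<^sup>2 + \<xi>\<^sup>2)"
  have "integral {0..L} (\<lambda>y. u y * ut y) \<le> integral {0..L} ?R"
  proof (rule integral_le_open_interval)
    fix y assume "0 < y" "y < L"
    then have "u y * (ut y - (D * uxx y - a * ux y - g * u y)) \<le> \<kappa> / 2 * ((u y)\<^sup>2 + \<xi>\<^sup>2)"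
      by (intro mult_le_half_squares_if_abs_le perturbed \<kappa>)
    then show "u y * ut y \<le> ?R y"
      by (simp add: algebra_simps power2_eq_square)
  qed (intro continuous_intros continuous_u continuous_ux continuous_uxx ut_cont)+
  also have "\<dots> = D * (- \<gamma> * (u 0)\<^sup>2 - integral {0..L} (\<lambda>y. (ux y)\<^sup>2)) - a * (- (u 0)\<^sup>2 / 2)
      - g * integral {0..L} (\<lambda>y. (u y)\<^sup>2) + \<kappa> / 2 * (integral {0..L} (\<lambda>y. (u y)\<^sup>2) + L * \<xi>\<^sup>2)"
    using length_pos
    by (intro integral_unique has_integral_add has_integral_diff has_integral_mult_right
        has_integral_u_uxx has_integral_u_ux integrable_integral integrable_continuous_real
        continuous_intros continuous_u has_integral_const_real[THEN has_integral_eq_rhs]) auto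
  finally show ?thesis
    by (simp add: algebra_simps)
qed

lemma energy_estimate_H1:
  assumes ut_cont: "continuous_on {0..L} ut" and \<kappa>: "0 \<le> \<kappa>" and D: "0 < D"
    and perturbed: "\<And>y. 0 < y \<Longrightarrow> y < L \<Longrightarrow> \<bar>ut y - (D * uxx y - a * ux y - g * u y)\<bar> \<le> \<kappa> * \<xi>"
  shows "- integral {0..L} (\<lambda>y. uxx y * ut y)
    \<le> - (3 * D / 4) * integral {0..L} (\<lambda>y. (uxx y)\<^sup>2) + a\<^sup>2 / D * integral {0..L} (\<lambda>y. (ux y)\<^sup>2)
       - g * \<gamma> * (u 0)\<^sup>2 - g * integral {0..L} (\<lambda>y. (ux y)\<^sup>2)
       + \<kappa> / 2 * (integral {0..L} (\<lambda>y. (uxx y)\<^sup>2) + L * \<xi>\<^sup>2)"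
proof -
  let ?R = "\<lambda>y. - (3 * D / 4) * (uxx y)\<^sup>2 + a\<^sup>2 / D * (ux y)\<^sup>2 + g * (u y * uxx y) + \<kappa> / 2 * ((uxx y)\<^sup>2 + \<xi>\<^sup>2)"
  have "integral {0..L} (\<lambda>y. - (uxx y * ut y)) \<le> integral {0..L} ?R"
  proof (rule integral_le_open_interval)
    fix y assume "0 < y" "y < L"
    then have "- uxx y * (ut y - (D * uxx y - a * ux y - g * u y)) \<le> \<kappa> / 2 * ((uxx y)\<^sup>2 + \<xi>\<^sup>2)"
      using mult_le_half_squares_if_abs_le[OF perturbed \<kappa>, of y "- uxx y"] by simp
    moreover have "a * (uxx y * ux y) \<le> D / 4 * (uxx y)\<^sup>2 + a\<^sup>2 / D * (ux y)\<^sup>2"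
      by (rule mult_le_weighted_squares[OF D])
    moreover have "- (uxx y * ut y) = - D * (uxx y)\<^sup>2 + a * (uxx y * ux y) + g * (u y * uxx y)
        + - uxx y * (ut y - (D * uxx y - a * ux y - g * u y))"
      by (simp add: algebra_simps power2_eq_square)
    ultimately show "- (uxx y * ut y) \<le> ?R y"
      by linarith
  qed (intro continuous_intros continuous_u continuous_ux continuous_uxx ut_cont)+
  also have "\<dots> = - (3 * D / 4) * integral {0..L} (\<lambda>y. (uxx y)\<^sup>2) + a\<^sup>2 / D * integral {0..L} (\<lambda>y. (ux y)\<^sup>2)
      + g * (- \<gamma> * (u 0)\<^sup>2 - integral {0..L} (\<lambda>y. (ux y)\<^sup>2))
      + \<kappa> / 2 * (integral {0..L} (\<lambda>y. (uxx y)\<^sup>2) + L * \<xi>\<^sup>2)"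
    using length_pos
    by (intro integral_unique has_integral_add has_integral_diff has_integral_mult_right
        has_integral_u_uxx integrable_integral integrable_continuous_real
        continuous_intros continuous_ux continuous_uxx has_integral_const_real[THEN has_integral_eq_rhs]) auto
  finally show ?thesis
    by (simp add: algebra_simps)
qed

end

lemma matrix_vector_mult_bound:
  obtains p where "p > 0" "\<And>x. norm ((P::real^'n^'m) *v x) \<le> p * norm x"
  using bounded_linear.pos_bounded[OF matrix_vector_mul_bounded_linear[of P]] by (auto simp: mult.commute)

lemma quadratic_form_le:
  assumes "\<And>x. norm ((P::real^'n^'n) *v x) \<le> p * norm x"
  shows "x \<bullet> (P *v x) \<le> p * (norm x)\<^sup>2"
proof -
  have "x \<bullet> (P *v x) \<le> norm x * norm (P *v x)"
    by (rule norm_cauchy_schwarz)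
  also have "\<dots> \<le> norm x * (p * norm x)"
    by (rule mult_left_mono[OF assms norm_ge_zero])
  finally show ?thesis
    by (simp add: power2_eq_square mult_ac)
qed

lemma pos_def_quadratic_form_ge:
  assumes "pos_def (P::real^'n^'n)"
  obtains p where "p > 0" "\<And>x. p * (norm x)\<^sup>2 \<le> x \<bullet> (P *v x)"
proof -
  let ?f = "\<lambda>x::real^'n. x \<bullet> (P *v x)"
  obtain i :: 'n where True by simp
  have "axis i 1 \<in> sphere (0::real^'n) 1"
    by simp
  then obtain x0 where x0: "x0 \<in> sphere 0 1" "\<And>y. y \<in> sphere 0 1 \<Longrightarrow> ?f x0 \<le> ?f y"
    using continuous_attains_inf[OF compact_sphere _ continuous_on_inner[OF continuous_on_id
          matrix_vector_mult_linear_continuous_on]] by blast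
  have "x0 \<noteq> 0"
    using x0(1) by auto
  then have "?f x0 > 0"
    using assms unfolding pos_def_def by blast
  moreover have "?f x0 * (norm x)\<^sup>2 \<le> ?f x" for x
  proof (cases "x = 0")
    case False
    define y where "y = (1 / norm x) *\<^sub>R x"
    have "y \<in> sphere 0 1" and x: "x = norm x *\<^sub>R y"
      unfolding y_def using False by auto
    then have "?f x = (norm x)\<^sup>2 * ?f y"
      by (metis (no_types, lifting) inner_scaleR_left inner_scaleR_right matrix_vector_mult_scaleR
          power2_eq_square mult.assoc)
    then show ?thesis
      using x0(2)[OF \<open>y \<in> sphere 0 1\<close>] by (simp add: mult.commute mult_right_mono)
  qed simp
  ultimately show ?thesis
    using that by blast
qed

lemma quadratic_form_has_derivative:
  fixes X :: "real \<Rightarrow> real^'n"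
  assumes "(X has_vector_derivative X') (at t within S)" and "transpose P = P"
  shows "((\<lambda>t. X t \<bullet> (P *v X t)) has_real_derivative 2 * ((P *v X t) \<bullet> X')) (at t within S)"
proof -
  have "((\<lambda>t. X t \<bullet> (P *v X t)) has_vector_derivative X t \<bullet> (P *v X') + X' \<bullet> (P *v X t)) (at t within S)"
    using bounded_bilinear.has_vector_derivative[OF bounded_bilinear_inner assms(1)
        bounded_linear.has_vector_derivative[OF matrix_vector_mul_bounded_linear assms(1)]] .
  moreover have "X t \<bullet> (P *v X') = (P *v X t) \<bullet> X'"
    using assms(2) by (metis dot_lmul_matrix inner_commute transpose_transpose vector_transpose_matrix)
  ultimately show ?thesis
    by (simp add: has_real_derivative_iff_has_vector_derivative inner_commute)
qed

lemma lyapunov_quadratic_form: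
  fixes G P Q :: "real^'n^'n"
  assumes "transpose G ** P + P ** G = - Q" "transpose P = P"
  shows "2 * ((P *v x) \<bullet> (G *v x)) = - (x \<bullet> (Q *v x))"
proof -
  have "x \<bullet> (transpose G *v (P *v x)) = (P *v x) \<bullet> (G *v x)"
    by (metis dot_lmul_matrix inner_commute vector_transpose_matrix)
  moreover have "x \<bullet> (P *v (G *v x)) = (P *v x) \<bullet> (G *v x)"
    using assms(2) by (metis dot_lmul_matrix vector_transpose_matrix)
  moreover have "x \<bullet> ((transpose G ** P + P ** G) *v x)
      = x \<bullet> (transpose G *v (P *v x)) + x \<bullet> (P *v (G *v x))"
    by (simp add: matrix_vector_mult_add_rdistrib matrix_vector_mul_assoc inner_add_right)
  moreover have "(- Q) *v x = - (Q *v x)"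
    by (simp add: matrix_vector_mult_def vec_eq_iff sum_negf)
  ultimately show ?thesis
    using assms(1) by simp
qed

lemma cross_term_le:
  fixes v p \<beta> \<xi> q :: real
  assumes "\<bar>p\<bar> \<le> \<beta> * \<xi>" "0 < q"
  shows "2 * (v * p) \<le> q / 2 * \<xi>\<^sup>2 + 2 * \<beta>\<^sup>2 / q * v\<^sup>2"
proof -
  have "2 * (v * p) \<le> 2 * (\<bar>v\<bar> * (\<beta> * \<xi>))"
    using mult_left_mono[OF assms(1), of "\<bar>v\<bar>"] by (simp add: abs_mult[symmetric])
  moreover have "0 \<le> 2 / q * (q / 2 * \<xi> - \<beta> * \<bar>v\<bar>)\<^sup>2"
    using assms(2) by simp
  moreover have "2 / q * (q / 2 * \<xi> - \<beta> * \<bar>v\<bar>)\<^sup>2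
      = q / 2 * \<xi>\<^sup>2 + 2 * \<beta>\<^sup>2 / q * v\<^sup>2 - 2 * (\<bar>v\<bar> * (\<beta> * \<xi>))"
    using assms(2) by (simp add: power2_eq_square field_simps)
  ultimately show ?thesis
    by linarith
qed

lemma dissipation_arithmetic:
  fixes T1 T2 Tx v WL W0 I0 I1 I2 Xn L lbar D a g \<gamma> \<kappa> \<nu> q d1 d2 \<kappa>' :: real
  assumes E1: "T1 \<le> - (D * \<gamma> - a / 2) * W0 - D * I1 - g * I0 + \<kappa> / 2 * (I0 + L * Xn)"
    and E2: "T2 \<le> - (3 * D / 4) * I2 + a\<^sup>2 / D * I1 - g * \<gamma> * W0 - g * I1 + \<kappa> / 2 * (I2 + L * Xn)"
    and E3: "WL \<le> \<gamma>\<^sup>2 * W0 + I1 + I2"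
    and E4: "Tx \<le> - d2 * q / 2 * Xn + d2 * \<kappa>' * WL"
    and nonneg: "0 \<le> W0" "0 \<le> I0" "0 \<le> I1" "0 \<le> I2" "0 \<le> Xn" "0 \<le> WL" "0 \<le> d1" "0 \<le> d2 * \<kappa>'"
    and L: "0 \<le> L" "L \<le> lbar" and D: "0 < D" and \<gamma>: "0 < \<gamma>" and \<kappa>: "0 \<le> \<kappa>"
    and a: "a \<le> D * \<gamma>" "a\<^sup>2 / D \<le> d1 * D"
    and speed: "\<bar>v\<bar> \<le> \<nu>" "\<nu> * \<gamma> \<le> g / 2" "\<nu> \<le> g / 2" "\<nu> \<le> D / 2"
    and source: "\<kappa> \<le> g" "\<kappa> \<le> D / 2" "(d1 + 1) * \<kappa> * lbar \<le> d2 * q / 2"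
    and gain: "d2 * \<kappa>' * \<gamma> \<le> g / 4" "d2 * \<kappa>' \<le> g / 4" "d2 * \<kappa>' \<le> D / 4"
  shows "d1 * T1 - v / 2 * WL + T2 + Tx \<le> - (g * \<gamma> / 2) * W0 - (d1 * g / 2) * I0 - (g / 2) * I1 - (d2 * q / 4) * Xn"
proof -
  define c where "c = \<nu> / 2 + d2 * \<kappa>'"
  have "- v / 2 * WL \<le> \<nu> / 2 * WL"
    using speed(1) nonneg(6) by (intro mult_right_mono) auto
  then have "d1 * T1 - v / 2 * WL + T2 + Tx
      \<le> d1 * (- (D * \<gamma> - a / 2) * W0 - D * I1 - g * I0 + \<kappa> / 2 * (I0 + L * Xn))
         + (- (3 * D / 4) * I2 + a\<^sup>2 / D * I1 - g * \<gamma> * W0 - g * I1 + \<kappa> / 2 * (I2 + L * Xn))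
         + c * (\<gamma>\<^sup>2 * W0 + I1 + I2) - d2 * q / 2 * Xn"
  proof -
    have "0 \<le> c"
      using speed(1) nonneg(8) unfolding c_def by linarith
    moreover have "c * WL = \<nu> / 2 * WL + d2 * \<kappa>' * WL"
      unfolding c_def by (simp add: algebra_simps)
    ultimately show ?thesis
      using mult_left_mono[OF E1 nonneg(7)] E2 E4 mult_left_mono[OF E3, of c] \<open>- v / 2 * WL \<le> \<nu> / 2 * WL\<close>
      by linarith
  qed
  also have "\<dots> = (- d1 * (D * \<gamma> - a / 2) - g * \<gamma> + c * \<gamma>\<^sup>2) * W0 + (- d1 * g + d1 * \<kappa> / 2) * I0
      + (- d1 * D + a\<^sup>2 / D - g + c) * I1 + (- 3 * D / 4 + \<kappa> / 2 + c) * I2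
      + ((d1 + 1) * \<kappa> * L / 2 - d2 * q / 2) * Xn"
    by (simp add: algebra_simps add_divide_distrib)
  also have "\<dots> \<le> - (g * \<gamma> / 2) * W0 - (d1 * g / 2) * I0 - (g / 2) * I1 + 0 * I2 - (d2 * q / 4) * Xn"
  proof -
    have "d1 * (D * \<gamma> / 2) \<le> d1 * (D * \<gamma> - a / 2)"
      using a(1) nonneg(7) by (intro mult_left_mono) auto
    moreover have "c * \<gamma>\<^sup>2 \<le> g * \<gamma> / 2"
    proof -
      have "(\<nu> * \<gamma>) * \<gamma> \<le> (g / 2) * \<gamma>" "(d2 * \<kappa>' * \<gamma>) * \<gamma> \<le> (g / 4) * \<gamma>"
        using speed(2) gain(1) \<gamma> by (intro mult_right_mono; simp)+
      moreover have "c * \<gamma>\<^sup>2 = (\<nu> * \<gamma>) * \<gamma> / 2 + (d2 * \<kappa>' * \<gamma>) * \<gamma>"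
        unfolding c_def by (simp add: power2_eq_square algebra_simps)
      ultimately show ?thesis
        by linarith
    qed
    moreover have "0 \<le> d1 * (D * \<gamma> / 2)"
      using nonneg(7) D \<gamma> by simp
    ultimately have W0: "- d1 * (D * \<gamma> - a / 2) - g * \<gamma> + c * \<gamma>\<^sup>2 \<le> - (g * \<gamma> / 2)"
      by linarith
    have I0: "- d1 * g + d1 * \<kappa> / 2 \<le> - (d1 * g / 2)"
      using mult_left_mono[OF source(1) nonneg(7)] by simp
    have I1: "- d1 * D + a\<^sup>2 / D - g + c \<le> - (g / 2)"
      using a(2) speed(3) gain(2) unfolding c_def by simp
    have I2: "- 3 * D / 4 + \<kappa> / 2 + c \<le> 0"
      using source(2) speed(4) gain(3) unfolding c_def by simp
    have "(d1 + 1) * \<kappa> * L \<le> (d1 + 1) * \<kappa> * lbar"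
      using L nonneg(7) \<kappa> by (intro mult_left_mono) auto
    then have Xn: "(d1 + 1) * \<kappa> * L / 2 - d2 * q / 2 \<le> - (d2 * q / 4)"
      using source(3) by simp
    show ?thesis
      using mult_right_mono[OF W0 nonneg(1)] mult_right_mono[OF I0 nonneg(2)]
        mult_right_mono[OF I1 nonneg(3)] mult_right_mono[OF I2 nonneg(4)] mult_right_mono[OF Xn nonneg(5)]
      by linarith
  qed
  finally show ?thesis
    by simp
qed

section \<open>Exponential decay and continuation\<close>

lemma exponential_decay_of_differential_inequality:
  fixes V :: "real \<Rightarrow> real"
  assumes T: "0 \<le> T"
    and V': "\<And>t. t \<in> {0..T} \<Longrightarrow> \<exists>V'. (V has_real_derivative V') (at t within {0..}) \<and> V' \<le> - c * V t"
  shows "V T \<le> V 0 * exp (- c * T)"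
proof -
  define h where "h s = V s * exp (c * s)" for s
  have h': "\<exists>h'. (h has_real_derivative h') (at s within {0..}) \<and> h' \<le> 0" if s: "s \<in> {0..T}" for s
  proof -
    obtain v where v: "(V has_real_derivative v) (at s within {0..})" "v \<le> - c * V s"
      using V'[OF s] by blast
    have "(h has_real_derivative v * exp (c * s) + V s * (exp (c * s) * c)) (at s within {0..})"
      unfolding h_def
      by (rule DERIV_cong[OF DERIV_mult[OF v(1) DERIV_chain2[OF DERIV_exp DERIV_cmult_Id]]])
         (simp add: algebra_simps)
    moreover have "v * exp (c * s) \<le> (- c * V s) * exp (c * s)"
      using v(2) by (intro mult_right_mono) auto
    ultimately show ?thesis
      by (intro exI[of _ "v * exp (c * s) + V s * (exp (c * s) * c)"]) (simp add: algebra_simps)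
  qed
  have "h T \<le> h 0"
  proof (rule DERIV_nonpos_imp_decreasing_open[OF T])
    fix s assume "0 < s" "s < T"
    then show "\<exists>y. DERIV h s :> y \<and> y \<le> 0"
      using h'[of s] at_within_interior[of s "{0..}"] by auto
  next
    show "continuous_on {0..T} h"
      unfolding continuous_on_eq_continuous_within
    proof
      fix s assume "s \<in> {0..T}"
      then obtain h'' where "(h has_real_derivative h'') (at s within {0..})"
        using h' by blast
      then show "continuous (at s within {0..T}) h"
        by (rule continuous_within_subset[OF DERIV_continuous]) auto
    qed
  qed
  then have "V T * exp (c * T) * exp (- c * T) \<le> V 0 * exp (- c * T)"
    unfolding h_def by (intro mult_right_mono) auto
  then show ?thesis
    by (simp add: mult.assoc flip: exp_add)
qed

lemma continuation_argument:
  fixes f :: "real \<Rightarrow> real"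
  assumes f_cont: "continuous_on {0..} f" and f0: "f 0 < R"
    and step: "\<And>T. 0 \<le> T \<Longrightarrow> (\<forall>t\<in>{0..T}. f t \<le> R) \<Longrightarrow> f T < R"
    and t: "0 \<le> t"
  shows "f t < R"
proof (rule ccontr)
  assume "\<not> f t < R"
  have cont: "continuous_on {0..s} f" for s
    using continuous_on_subset[OF f_cont] by auto
  have crossing: "\<exists>r. 0 \<le> r \<and> r \<le> s \<and> f r = R" if "0 \<le> s" "R \<le> f s" for s
    by (rule IVT') (use f0 that cont in auto)
  define S where "S = {s \<in> {0..t}. f s = R}"
  have "S \<noteq> {}"
    using crossing[OF t] \<open>\<not> f t < R\<close> unfolding S_def by auto
  moreover have "compact S"
  proof -
    have "closed S"
      unfolding S_def by (rule continuous_closed_preimage_constant[OF cont closed_atLeastAtMost])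
    moreover have "S \<subseteq> {0..t}"
      unfolding S_def by auto
    then have "bounded S"
      by (rule bounded_subset[OF compact_imp_bounded[OF compact_Icc]])
    ultimately show ?thesis
      by (simp add: compact_eq_bounded_closed)
  qed
  ultimately obtain T where T: "T \<in> S" "\<And>s. s \<in> S \<Longrightarrow> T \<le> s"
    using compact_attains_inf by meson
  have "f s \<le> R" if s: "s \<in> {0..T}" for s
  proof (rule ccontr)
    assume "\<not> f s \<le> R"
    then obtain r where r: "0 \<le> r" "r \<le> s" "f r = R"
      using crossing[of s] s by auto
    then have "r \<in> S"
      using s T(1) unfolding S_def by auto
    then have "r = s"
      using T(2)[of r] r s by auto
    then show False
      using r(3) \<open>\<not> f s \<le> R\<close> by simp
  qed
  then show False
    using step[of T] T(1) unfolding S_def by auto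
qed

text \<open>With these two facts the second row of the ODE reads \<open>z\<^sub>2' = r\<^sub>g z\<^sub>1\<close>, so that
  \<open>l' = r\<^sub>g z\<^sub>1\<close> for \<open>l = l\<^sub>s + z\<^sub>2\<close>.\<close>

locale closed_loop =
  fixes rg :: real and A :: "real^2^2" and B K :: "real^2"
  assumes closed_loop_row2: "\<And>x. ((A + outer B K) *v x) $ 2 = rg * x $ 1"
    and B_row2: "B $ 2 = 0"

locale target_trajectory = closed_loop rg A B K
  for D a g rg ls \<gamma> :: real and A :: "real^2^2" and B C K :: "real^2"
    and w wx wxx wt wxt :: "real \<Rightarrow> real \<Rightarrow> real" and z1 z2 :: "real \<Rightarrow> real" +
  assumes solution: "target_solution D a g rg ls \<gamma> A B C K w wx wxx wt wxt z1 z2"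
begin

abbreviation state :: "real \<Rightarrow> real^2" where
  "state t \<equiv> vector [z1 t, z2 t]"

lemma continuous_w: "continuous_on (dom_cl ls z2) (\<lambda>(x, s). w x s)"
  and continuous_wx: "continuous_on (dom_cl ls z2) (\<lambda>(x, s). wx x s)"
  and continuous_wxx: "continuous_on (dom_cl ls z2) (\<lambda>(x, s). wxx x s)"
  and continuous_wt: "continuous_on (dom_cl ls z2) (\<lambda>(x, s). wt x s)"
  and continuous_wxt: "continuous_on (dom_cl ls z2) (\<lambda>(x, s). wxt x s)"
  using solution unfolding target_solution_def Let_def by auto

lemma w_deriv: "(x, s) \<in> dom_cl ls z2 \<Longrightarrow>
    ((\<lambda>y. w y s) has_real_derivative wx x s) (at x within {0..ls + z2 s})"
  and wx_deriv: "(x, s) \<in> dom_cl ls z2 \<Longrightarrow>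
    ((\<lambda>y. wx y s) has_real_derivative wxx x s) (at x within {0..ls + z2 s})"
  and w_time_deriv: "(x, s) \<in> dom_cl ls z2 \<Longrightarrow>
    ((\<lambda>r. w x r) has_real_derivative wt x s) (at s within {r. 0 \<le> r \<and> x \<le> ls + z2 r})"
  and wx_time_deriv: "(x, s) \<in> dom_cl ls z2 \<Longrightarrow>
    ((\<lambda>r. wx x r) has_real_derivative wxt x s) (at s within {r. 0 \<le> r \<and> x \<le> ls + z2 r})"
  using solution unfolding target_solution_def Let_def by auto

lemma pde: "0 \<le> s \<Longrightarrow> 0 < x \<Longrightarrow> x < ls + z2 s \<Longrightarrow>
    wt x s = D * wxx x s - a * wx x s - g * w x s - rg * z1 s * Fterm D a g A B C K (ls + z2 s) x (state s)"
  and robin_bc: "0 \<le> s \<Longrightarrow> wx 0 s = \<gamma> * w 0 s"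
  and dirichlet_bc: "0 \<le> s \<Longrightarrow> w (ls + z2 s) s = 0"
  and ode: "0 \<le> s \<Longrightarrow> (state has_vector_derivative
    ((A + outer B K) *v state s + wx (ls + z2 s) s *\<^sub>R B)) (at s within {0..})"
  using solution unfolding target_solution_def Let_def by auto

lemma continuous_state: "continuous_on {0..} state"
  using has_vector_derivative_continuous[OF ode]
  by (simp add: continuous_on_eq_continuous_within)

lemma interface_has_derivative:
  assumes "0 \<le> s"
  shows "((\<lambda>s. ls + z2 s) has_real_derivative rg * z1 s) (at s within {0..})"
proof -
  have "((\<lambda>t. state t $ 2) has_vector_derivative
      ((A + outer B K) *v state s + wx (ls + z2 s) s *\<^sub>R B) $ 2) (at s within {0..})"
    by (rule bounded_linear.has_vector_derivative[OF bounded_linear_vec_nth ode[OF assms]])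
  then show ?thesis
    by (auto intro!: derivative_eq_intros
        simp: closed_loop_row2 B_row2 has_real_derivative_iff_has_vector_derivative)
qed

sublocale moving_domain "\<lambda>s. ls + z2 s"
  by unfold_locales (rule DERIV_continuous_on[OF interface_has_derivative], simp)

lemma domain_eq: "domain = dom_cl ls z2"
  unfolding domain_def dom_cl_def ..

text \<open>No regularity of \<open>w\<^sub>t\<close> in \<open>x\<close> is assumed.  Instead, the Dirichlet condition gives
  that \<open>- w(x0, s)\<close> is the integral of \<open>w\<^sub>x(\<cdot>, s)\<close> over \<open>[x0, l(s)]\<close>, and differentiating this identity by the Leibniz rule
  expresses \<open>w\<^sub>t\<close> through \<open>w\<^sub>x\<^sub>t\<close>.\<close>

lemma wt_eq_boundary_flux:
  assumes t: "0 \<le> t" and x0: "0 \<le> x0" "x0 < ls + z2 t"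
  shows "wt x0 t = - (rg * z1 t * wx (ls + z2 t) t) - integral {x0..ls + z2 t} (\<lambda>y. wxt y t)"
proof -
  obtain d where d: "d > 0" "\<And>s. s \<in> {0..} \<Longrightarrow> \<bar>s - t\<bar> < d \<Longrightarrow> x0 < ls + z2 s"
    using boundary_stays_above[OF t x0(2)] by blast
  have flux: "((\<lambda>s. integral {x0..ls + z2 s} (\<lambda>y. wx y s)) has_real_derivative
      rg * z1 t * wx (ls + z2 t) t + integral {x0..ls + z2 t} (\<lambda>y. wxt y t)) (at t within {0..})"
    by (rule leibniz_rule[OF interface_has_derivative[OF t] t x0])
       (auto simp: domain_eq intro: continuous_wx continuous_wxt wx_time_deriv)
  have "integral {x0..ls + z2 s} (\<lambda>y. wx y s) = - w x0 s" if "s \<in> {0..}" "dist s t < d" for s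
  proof -
    have "x0 < ls + z2 s"
      using d(2) that by (simp add: dist_real_def)
    then have "integral {x0..ls + z2 s} (\<lambda>y. wx y s) = w (ls + z2 s) s - w x0 s"
      using that x0 by (intro integral_eq_diff_real)
        (auto intro!: DERIV_subset[OF w_deriv] simp: dom_cl_def)
    then show ?thesis
      using dirichlet_bc that by simp
  qed
  then have "((\<lambda>s. - w x0 s) has_real_derivative
      rg * z1 t * wx (ls + z2 t) t + integral {x0..ls + z2 t} (\<lambda>y. wxt y t)) (at t within {0..})"
    by (intro has_field_derivative_transform_within[OF flux d(1)]) (use t in auto)
  moreover have "((\<lambda>s. - w x0 s) has_real_derivative - wt x0 t) (at t within {0..})"
    using t x0 d(2)
    by (intro DERIV_minus has_real_derivative_within_localize[OF w_time_deriv d(1)])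
       (force simp: dom_cl_def)+
  ultimately show ?thesis
    using has_field_derivative_unique[OF _ _ at_within_Ici_nontrivial[OF t]] by fastforce
qed

lemma continuous_on_slice_at:
  assumes "continuous_on (dom_cl ls z2) (\<lambda>(x, s). f x s)" "0 \<le> t"
  shows "continuous_on {0..ls + z2 t} (\<lambda>y. f y t)"
  using continuous_on_slice[of f t 0 "ls + z2 t"] assms by (simp add: domain_eq)

lemma robin_profile_at:
  assumes "0 \<le> t" "0 < ls + z2 t"
  shows "robin_profile (ls + z2 t) \<gamma> (\<lambda>y. w y t) (\<lambda>y. wx y t) (\<lambda>y. wxx y t)"
  using assms
  by unfold_locales (auto intro!: continuous_on_slice_at continuous_w continuous_wx continuous_wxx
      w_deriv wx_deriv robin_bc dirichlet_bc simp: dom_cl_def)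

text \<open>By the previous lemma \<open>w\<^sub>t(\<cdot>, t)\<close> is an antiderivative of \<open>w\<^sub>x\<^sub>t(\<cdot>, t)\<close> on \<open>[0, l)\<close>,
  which is what the integration by parts needs.\<close>

lemma integral_wx_wxt:
  assumes t: "0 \<le> t" and L: "0 < ls + z2 t"
  shows "integral {0..ls + z2 t} (\<lambda>y. wx y t * wxt y t)
       = - (rg * z1 t) * (wx (ls + z2 t) t)\<^sup>2 - \<gamma> * w 0 t * wt 0 t
         - integral {0..ls + z2 t} (\<lambda>y. wxx y t * wt y t)"
proof -
  define L where "L = ls + z2 t"
  define W where "W y = wt 0 t + integral {0..y} (\<lambda>z. wxt z t)" for y
  have cont: "continuous_on {0..L} (\<lambda>z. wx z t)" "continuous_on {0..L} (\<lambda>z. wxx z t)"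
    "continuous_on {0..L} (\<lambda>z. wt z t)" "continuous_on {0..L} (\<lambda>z. wxt z t)"
    using continuous_on_slice_at[OF _ t] continuous_wx continuous_wxx continuous_wt continuous_wxt
    unfolding L_def by auto
  have W_deriv: "(W has_real_derivative wxt y t) (at y within {0..L})" if "y \<in> {0..L}" for y
    unfolding W_def using DERIV_add[OF DERIV_const integral_has_real_derivative[OF cont(4) that]] by simp
  have wt_0: "wt 0 t = - (rg * z1 t * wx L t) - integral {0..L} (\<lambda>y. wxt y t)"
    using wt_eq_boundary_flux[OF t _ L] unfolding L_def by simp
  have W_eq: "W y = wt y t" if "0 \<le> y" "y < L" for y
  proof -
    have "integral {0..y} (\<lambda>y. wxt y t) + integral {y..L} (\<lambda>y. wxt y t) = integral {0..L} (\<lambda>y. wxt y t)"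
      using that integrable_continuous_real[OF cont(4)] by (intro Henstock_Kurzweil_Integration.integral_combine) auto
    then show ?thesis
      using wt_eq_boundary_flux[OF t that(1)] that(2) wt_0 unfolding W_def L_def by simp
  qed
  have "((\<lambda>y. wx y t * W y) has_real_derivative wxx y t * W y + wx y t * wxt y t) (at y within {0..L})"
    if "y \<in> {0..L}" for y
  proof -
    have "((\<lambda>y. wx y t) has_real_derivative wxx y t) (at y within {0..L})"
      using wx_deriv[of y t] that t by (simp add: dom_cl_def L_def)
    from DERIV_mult[OF this W_deriv[OF that]] show ?thesis
      by (simp add: mult.commute)
  qed
  then have "integral {0..L} (\<lambda>y. wxx y t * W y + wx y t * wxt y t) = wx L t * W L - wx 0 t * W 0"
    using L unfolding L_def by (intro integral_eq_diff_real) auto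
  moreover have "integral {0..L} (\<lambda>y. wxx y t * W y + wx y t * wxt y t)
      = integral {0..L} (\<lambda>y. wxx y t * W y) + integral {0..L} (\<lambda>y. wx y t * wxt y t)"
    using DERIV_continuous_on[OF W_deriv]
    by (intro integral_add integrable_continuous_real continuous_intros cont) auto
  moreover have "integral {0..L} (\<lambda>y. wxx y t * W y) = integral {0..L} (\<lambda>y. wxx y t * wt y t)"
    unfolding integral_open_interval_real using W_eq by (intro integral_cong) auto
  moreover have "W L = - (rg * z1 t * wx L t)" "W 0 = wt 0 t"
    unfolding W_def using wt_0 by simp_all
  ultimately show ?thesis
    using robin_bc[OF t] unfolding L_def[symmetric]
    by (simp add: power2_eq_square algebra_simps)
qed

lemma lyapV_has_derivative:
  assumes t: "0 \<le> t" and L: "0 < ls + z2 t" and P_sym: "transpose P = P"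
  shows "(lyapV ls \<gamma> d1 d2 P w wx z1 z2 has_real_derivative
     d1 * integral {0..ls + z2 t} (\<lambda>y. w y t * wt y t) - rg * z1 t / 2 * (wx (ls + z2 t) t)\<^sup>2
     - integral {0..ls + z2 t} (\<lambda>y. wxx y t * wt y t)
     + 2 * d2 * ((P *v state t) \<bullet> ((A + outer B K) *v state t) + wx (ls + z2 t) t * ((P *v state t) \<bullet> B)))
     (at t within {0..})"
proof -
  have square_deriv: "((\<lambda>r. (f x r)\<^sup>2) has_real_derivative 2 * (f x s * h x s)) (at s within S)"
    if "((\<lambda>r. f x r) has_real_derivative h x s) (at s within S)"
    for f h :: "real \<Rightarrow> real \<Rightarrow> real" and x s S
    using DERIV_mult[OF that that] by (simp add: power2_eq_square algebra_simps)
  have leibniz_square: "((\<lambda>s. integral {0..ls + z2 s} (\<lambda>x. (f x s)\<^sup>2)) has_real_derivative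
      rg * z1 t * (f (ls + z2 t) t)\<^sup>2 + integral {0..ls + z2 t} (\<lambda>y. 2 * (f y t * h y t))) (at t within {0..})"
    if "continuous_on (dom_cl ls z2) (\<lambda>(x, s). f x s)" "continuous_on (dom_cl ls z2) (\<lambda>(x, s). h x s)"
      "\<And>x s. (x, s) \<in> dom_cl ls z2 \<Longrightarrow>
         ((\<lambda>r. f x r) has_real_derivative h x s) (at s within {r. 0 \<le> r \<and> x \<le> ls + z2 r})"
    for f h :: "real \<Rightarrow> real \<Rightarrow> real"
    using that L by (intro leibniz_rule[OF interface_has_derivative[OF t] t, of 0 "\<lambda>x s. (f x s)\<^sup>2"])
      (auto simp: domain_eq case_prod_beta' intro!: continuous_intros square_deriv)
  obtain d where d: "d > 0" "\<And>s. s \<in> {0..} \<Longrightarrow> \<bar>s - t\<bar> < d \<Longrightarrow> 0 < ls + z2 s"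
    using boundary_stays_above[OF t L] by blast
  have E0: "((\<lambda>s. (w 0 s)\<^sup>2) has_real_derivative 2 * (w 0 t * wt 0 t)) (at t within {0..})"
    using t L d(2)
    by (intro has_real_derivative_within_localize[OF square_deriv[where f = w and h = wt, OF w_time_deriv] d(1)])
       (force simp: dom_cl_def)+
  have E1: "((\<lambda>s. integral {0..ls + z2 s} (\<lambda>x. (w x s)\<^sup>2)) has_real_derivative
      rg * z1 t * (w (ls + z2 t) t)\<^sup>2 + integral {0..ls + z2 t} (\<lambda>y. 2 * (w y t * wt y t))) (at t within {0..})"
    by (rule leibniz_square) (use continuous_w continuous_wt w_time_deriv in auto)
  have E2: "((\<lambda>s. integral {0..ls + z2 s} (\<lambda>x. (wx x s)\<^sup>2)) has_real_derivative
      rg * z1 t * (wx (ls + z2 t) t)\<^sup>2 + integral {0..ls + z2 t} (\<lambda>y. 2 * (wx y t * wxt y t))) (at t within {0..})"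
    by (rule leibniz_square) (use continuous_wx continuous_wxt wx_time_deriv in auto)
  note sum_rule = DERIV_add[OF DERIV_add[OF DERIV_add[OF
        DERIV_cmult[OF E1, of "d1 / 2"] DERIV_cmult[OF E2, of "1 / 2"]] DERIV_cmult[OF E0, of "\<gamma> / 2"]]
        DERIV_cmult[OF quadratic_form_has_derivative[OF ode[OF t] P_sym], of d2]]
  have V_eq: "lyapV ls \<gamma> d1 d2 P w wx z1 z2 = (\<lambda>s. d1 / 2 * integral {0..ls + z2 s} (\<lambda>x. (w x s)\<^sup>2)
      + 1 / 2 * integral {0..ls + z2 s} (\<lambda>x. (wx x s)\<^sup>2) + \<gamma> / 2 * (w 0 s)\<^sup>2 + d2 * (state s \<bullet> (P *v state s)))"
    by (simp add: fun_eq_iff lyapV_def Let_def)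
  show ?thesis
    unfolding V_eq
    by (rule DERIV_cong[OF sum_rule])
       (simp add: integral_wx_wxt[OF t L] dirichlet_bc[OF t] inner_add_right algebra_simps)
qed

end

locale lyapunov_model = closed_loop rg A B K
  for D a g rg ls \<gamma> lbar :: real and A :: "real^2^2" and B C K :: "real^2" and P Q :: "real^2^2"
    and CF q p0 p1 :: real +
  assumes D_pos: "0 < D" and g_pos: "0 < g" and rg_pos: "0 < rg" and \<gamma>_pos: "0 < \<gamma>"
    and a_le: "a \<le> D * \<gamma>" and ls_pos: "0 < ls" and ls_less: "ls < lbar"
    and Fterm_le: "\<And>L x X. 0 \<le> x \<Longrightarrow> x \<le> L \<Longrightarrow> L \<le> lbar \<Longrightarrow> \<bar>Fterm D a g A B C K L x X\<bar> \<le> CF * norm X"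
    and CF_nonneg: "0 \<le> CF"
    and P_sym: "transpose P = P"
    and P_lower: "0 < p0" "\<And>x. p0 * (norm x)\<^sup>2 \<le> x \<bullet> (P *v x)"
    and P_upper: "0 < p1" "\<And>x. norm (P *v x) \<le> p1 * norm x"
    and lyapunov: "transpose (A + outer B K) ** P + P ** (A + outer B K) = - Q"
    and Q_lower: "0 < q" "\<And>x. q * (norm x)\<^sup>2 \<le> x \<bullet> (Q *v x)"
begin

definition decay_rate :: real where
  "decay_rate = min g (q / (4 * p1))"

lemma decay_rate_pos: "0 < decay_rate"
  unfolding decay_rate_def using g_pos Q_lower(1) P_upper(1) by simp

end

locale lyapunov_weights = lyapunov_model +
  fixes d1 d2 :: real
  assumes d1: "0 \<le> d1" "a\<^sup>2 / D \<le> d1 * D"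
    and d2: "0 < d2"
    and gain: "d2 * (2 * (p1 * norm B)\<^sup>2 / q) * \<gamma> \<le> g / 4" "d2 * (2 * (p1 * norm B)\<^sup>2 / q) \<le> g / 4"
      "d2 * (2 * (p1 * norm B)\<^sup>2 / q) \<le> D / 4"

text \<open>The state is kept in the ball of radius \<open>\<rho>\<close>; there \<open>l\<close> stays in \<open>(0, lbar]\<close> and
  \<open>|l'| \<le> r\<^sub>g \<rho>\<close>.\<close>

locale lyapunov_gains = lyapunov_weights +
  fixes \<rho> :: real
  assumes radius: "0 < \<rho>" "\<rho> < ls" "ls + \<rho> \<le> lbar"
    and speed: "rg * \<rho> * \<gamma> \<le> g / 2" "rg * \<rho> \<le> g / 2" "rg * \<rho> \<le> D / 2"
    and source: "rg * \<rho> * CF \<le> g" "rg * \<rho> * CF \<le> D / 2" "(d1 + 1) * (rg * \<rho> * CF) * lbar \<le> d2 * q / 2"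

locale gains_trajectory = lyapunov_gains +
  target_trajectory D a g rg ls \<gamma> A B C K w wx wxx wt wxt z1 z2
  for w wx wxx wt wxt :: "real \<Rightarrow> real \<Rightarrow> real" and z1 z2 :: "real \<Rightarrow> real"
begin

lemma closed_loop_cross_terms_le:
  "2 * d2 * ((P *v state t) \<bullet> ((A + outer B K) *v state t) + v * ((P *v state t) \<bullet> B))
     \<le> - d2 * q / 2 * (norm (state t))\<^sup>2 + d2 * (2 * (p1 * norm B)\<^sup>2 / q) * v\<^sup>2"
proof -
  have "2 * ((P *v state t) \<bullet> ((A + outer B K) *v state t)) \<le> - q * (norm (state t))\<^sup>2"
    using lyapunov_quadratic_form[OF lyapunov P_sym, of "state t"] Q_lower(2)[of "state t"] by simp
  moreover have "\<bar>(P *v state t) \<bullet> B\<bar> \<le> (p1 * norm B) * norm (state t)"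
    using Cauchy_Schwarz_ineq2[of "P *v state t" B] mult_right_mono[OF P_upper(2)[of "state t"], of "norm B"]
    by (simp add: mult_ac)
  then have "2 * (v * ((P *v state t) \<bullet> B)) \<le> q / 2 * (norm (state t))\<^sup>2 + 2 * (p1 * norm B)\<^sup>2 / q * v\<^sup>2"
    using cross_term_le Q_lower(1) by blast
  ultimately have "2 * ((P *v state t) \<bullet> ((A + outer B K) *v state t) + v * ((P *v state t) \<bullet> B))
      \<le> - q / 2 * (norm (state t))\<^sup>2 + 2 * (p1 * norm B)\<^sup>2 / q * v\<^sup>2"
    by (simp add: algebra_simps)
  then show ?thesis
    using mult_left_mono[OF _ less_imp_le[OF d2]] by (fastforce simp: algebra_simps)
qed

lemma pde_source_le:
  assumes t: "0 \<le> t" and L: "ls + z2 t \<le> lbar" and v: "\<bar>rg * z1 t\<bar> \<le> rg * \<rho>"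
    and y: "0 < y" "y < ls + z2 t"
  shows "\<bar>wt y t - (D * wxx y t - a * wx y t - g * w y t)\<bar> \<le> rg * \<rho> * CF * norm (state t)"
proof -
  have "\<bar>wt y t - (D * wxx y t - a * wx y t - g * w y t)\<bar>
      = \<bar>rg * z1 t\<bar> * \<bar>Fterm D a g A B C K (ls + z2 t) y (state t)\<bar>"
    using pde[OF t y] by (simp add: abs_mult)
  also have "\<dots> \<le> rg * \<rho> * (CF * norm (state t))"
    using v Fterm_le[of y "ls + z2 t" "state t"] y L by (intro mult_mono) auto
  finally show ?thesis
    by (simp add: mult_ac)
qed

lemma lyapV_derivative_le:
  assumes t: "0 \<le> t" and L: "0 < ls + z2 t" "ls + z2 t \<le> lbar" and v: "\<bar>rg * z1 t\<bar> \<le> rg * \<rho>"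
  shows "\<exists>V'. (lyapV ls \<gamma> d1 d2 P w wx z1 z2 has_real_derivative V') (at t within {0..}) \<and>
    V' \<le> - (g * \<gamma> / 2) * (w 0 t)\<^sup>2 - (d1 * g / 2) * integral {0..ls + z2 t} (\<lambda>x. (w x t)\<^sup>2)
         - (g / 2) * integral {0..ls + z2 t} (\<lambda>x. (wx x t)\<^sup>2) - (d2 * q / 4) * (norm (state t))\<^sup>2"
proof -
  interpret profile: robin_profile "ls + z2 t" \<gamma> "\<lambda>y. w y t" "\<lambda>y. wx y t" "\<lambda>y. wxx y t"
    by (rule robin_profile_at[OF t L(1)])
  have wt_cont: "continuous_on {0..ls + z2 t} (\<lambda>y. wt y t)"
    by (rule continuous_on_slice_at[OF continuous_wt t])
  have \<kappa>: "0 \<le> rg * \<rho> * CF"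
    using rg_pos radius(1) CF_nonneg by simp
  note perturbed = pde_source_le[OF t L(2) v]
  have "d1 * integral {0..ls + z2 t} (\<lambda>y. w y t * wt y t) - rg * z1 t / 2 * (wx (ls + z2 t) t)\<^sup>2
      - integral {0..ls + z2 t} (\<lambda>y. wxx y t * wt y t)
      + 2 * d2 * ((P *v state t) \<bullet> ((A + outer B K) *v state t) + wx (ls + z2 t) t * ((P *v state t) \<bullet> B))
    \<le> - (g * \<gamma> / 2) * (w 0 t)\<^sup>2 - (d1 * g / 2) * integral {0..ls + z2 t} (\<lambda>x. (w x t)\<^sup>2)
       - (g / 2) * integral {0..ls + z2 t} (\<lambda>x. (wx x t)\<^sup>2) - (d2 * q / 4) * (norm (state t))\<^sup>2"
    using dissipation_arithmetic[OF profile.energy_estimate_L2[OF wt_cont \<kappa> perturbed]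
          profile.energy_estimate_H1[OF wt_cont \<kappa> D_pos perturbed] profile.boundary_gradient_sq_le
          closed_loop_cross_terms_le _ _ _ _ _ _ d1(1) _ less_imp_le[OF L(1)] L(2) D_pos \<gamma>_pos \<kappa> a_le d1(2)
          v speed source gain]
        d2 Q_lower(1)
    by (simp add: integral_square_nonneg)
  with lyapV_has_derivative[OF t L(1) P_sym] show ?thesis
    by blast
qed

lemma lyapV_ge_state: "d2 * p0 * (norm (state t))\<^sup>2 \<le> lyapV ls \<gamma> d1 d2 P w wx z1 z2 t"
proof -
  have "d2 * (p0 * (norm (state t))\<^sup>2) \<le> d2 * (state t \<bullet> (P *v state t))"
    using P_lower(2) d2 by (intro mult_left_mono) auto
  then show ?thesis
    using d1(1) \<gamma>_pos integral_square_nonneg[of _ "\<lambda>x. w x t"] integral_square_nonneg[of _ "\<lambda>x. wx x t"]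
    by (simp add: lyapV_def Let_def mult.assoc add_nonneg_nonneg add_increasing)
qed

lemma lyapV_derivative_le_decay:
  assumes t: "0 \<le> t" and L: "0 < ls + z2 t" "ls + z2 t \<le> lbar" and v: "\<bar>rg * z1 t\<bar> \<le> rg * \<rho>"
  shows "\<exists>V'. (lyapV ls \<gamma> d1 d2 P w wx z1 z2 has_real_derivative V') (at t within {0..}) \<and>
    V' \<le> - decay_rate * lyapV ls \<gamma> d1 d2 P w wx z1 z2 t"
proof -
  define I0 where "I0 = integral {0..ls + z2 t} (\<lambda>x. (w x t)\<^sup>2)"
  define I1 where "I1 = integral {0..ls + z2 t} (\<lambda>x. (wx x t)\<^sup>2)"
  have nonneg: "0 \<le> I0" "0 \<le> I1" "0 \<le> (w 0 t)\<^sup>2" "0 \<le> (norm (state t))\<^sup>2"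
    unfolding I0_def I1_def by (simp_all add: integral_square_nonneg)
  have rate: "decay_rate \<le> g" "decay_rate * p1 \<le> q / 4"
    unfolding decay_rate_def using P_upper(1) by (auto simp: min_def field_simps)
  have "decay_rate * (d2 * (state t \<bullet> (P *v state t))) \<le> decay_rate * (d2 * (p1 * (norm (state t))\<^sup>2))"
    using quadratic_form_le[OF P_upper(2)] decay_rate_pos d2 by (intro mult_left_mono) auto
  also have "\<dots> \<le> d2 * q / 4 * (norm (state t))\<^sup>2"
    using mult_left_mono[OF rate(2), of "d2 * (norm (state t))\<^sup>2"] d2 by (simp add: mult_ac)
  finally have "decay_rate * lyapV ls \<gamma> d1 d2 P w wx z1 z2 t
      \<le> (g * \<gamma> / 2) * (w 0 t)\<^sup>2 + (d1 * g / 2) * I0 + (g / 2) * I1 + (d2 * q / 4) * (norm (state t))\<^sup>2"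
    using mult_right_mono[OF rate(1), of "d1 / 2 * I0 + 1 / 2 * I1 + \<gamma> / 2 * (w 0 t)\<^sup>2"] nonneg d1(1) \<gamma>_pos
    unfolding lyapV_def Let_def I0_def[symmetric] I1_def[symmetric] by (simp add: algebra_simps)
  then show ?thesis
    using lyapV_derivative_le[OF t L v] unfolding I0_def I1_def by force
qed

lemma small_lyapV_decay:
  assumes small: "lyapV ls \<gamma> d1 d2 P w wx z1 z2 0 < d2 * p0 * \<rho>\<^sup>2" and t: "0 \<le> t"
  shows "0 < ls + z2 t \<and> ls + z2 t \<le> lbar \<and> \<bar>rg * z1 t\<bar> \<le> rg * \<rho> \<and>
    lyapV ls \<gamma> d1 d2 P w wx z1 z2 t \<le> lyapV ls \<gamma> d1 d2 P w wx z1 z2 0 * exp (- decay_rate * t)"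
proof -
  define V where "V = lyapV ls \<gamma> d1 d2 P w wx z1 z2"
  define f where "f s = (norm (state s))\<^sup>2" for s
  have dp: "0 < d2 * p0"
    using d2 P_lower(1) by simp
  have f_le: "d2 * p0 * f s \<le> V s" for s
    using lyapV_ge_state[of s] unfolding f_def V_def .
  have f_less: "f s < \<rho>\<^sup>2" if "V s < d2 * p0 * \<rho>\<^sup>2" for s
  proof -
    have "d2 * p0 * f s < d2 * p0 * \<rho>\<^sup>2"
      using f_le[of s] that by linarith
    then show ?thesis
      using mult_less_cancel_left_pos[OF dp] by blast
  qed
  have region: "0 < ls + z2 s \<and> ls + z2 s \<le> lbar \<and> \<bar>rg * z1 s\<bar> \<le> rg * \<rho>" if "f s \<le> \<rho>\<^sup>2" for s
  proof -
    have "norm (state s) \<le> \<rho>"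
      using that radius(1) unfolding f_def by (simp add: power2_le_iff_abs_le)
    then have "\<bar>z1 s\<bar> \<le> \<rho>" "\<bar>z2 s\<bar> \<le> \<rho>"
      using component_le_norm_cart[of "state s" 1] component_le_norm_cart[of "state s" 2] by auto
    then show ?thesis
      using radius rg_pos by (auto simp: abs_mult abs_le_iff)
  qed
  have decay: "V T \<le> V 0 * exp (- decay_rate * T)" if "0 \<le> T" "\<forall>s\<in>{0..T}. f s \<le> \<rho>\<^sup>2" for T
    using that region unfolding V_def
    by (intro exponential_decay_of_differential_inequality lyapV_derivative_le_decay) auto
  have small_V: "V 0 < d2 * p0 * \<rho>\<^sup>2"
    using small unfolding V_def .
  have "0 \<le> d2 * p0 * f 0"
    using dp unfolding f_def by simp
  then have V0: "0 \<le> V 0"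
    using f_le[of 0] by linarith
  have f_small: "f s < \<rho>\<^sup>2" if "0 \<le> s" for s
  proof (rule continuation_argument[OF _ _ _ that])
    show "continuous_on {0..} f"
      unfolding f_def by (intro continuous_intros continuous_state)
    show "f 0 < \<rho>\<^sup>2"
      by (rule f_less[OF small_V])
    fix T assume T: "0 \<le> T" "\<forall>s\<in>{0..T}. f s \<le> \<rho>\<^sup>2"
    have "exp (- decay_rate * T) \<le> 1"
      using decay_rate_pos T(1) by simp
    then have "V 0 * exp (- decay_rate * T) \<le> V 0"
      by (rule mult_left_le[OF _ V0])
    then have "V T \<le> V 0"
      using decay[OF T] by linarith
    then show "f T < \<rho>\<^sup>2"
      by (intro f_less le_less_trans[OF _ small_V])
  qed
  have "\<forall>s\<in>{0..t}. f s \<le> \<rho>\<^sup>2"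
    using f_small by (auto intro: less_imp_le)
  then show ?thesis
    using region[OF less_imp_le[OF f_small[OF t]]] decay[OF t] unfolding V_def by simp
qed

end

section \<open>Choice of the weights\<close>

lemma eventually_mult_le_at_right_0:
  fixes k b :: real
  assumes "0 < b"
  shows "\<forall>\<^sub>F x in at_right 0. x * k \<le> b"
proof -
  have "((\<lambda>x. x * k) \<longlongrightarrow> 0 * k) (at_right 0)"
    by (intro tendsto_intros)
  then show ?thesis
    using order_tendstoD(2)[of "\<lambda>x. x * k" 0 "at_right 0" b] assms by (auto elim: eventually_mono)
qed

lemma (in lyapunov_gains) small_data_decay:
  assumes "target_solution D a g rg ls \<gamma> A B C K w wx wxx wt wxt z1 z2"
    and small: "lyapV ls \<gamma> d1 d2 P w wx z1 z2 0 < d2 * p0 * \<rho>\<^sup>2" and r: "r \<le> decay_rate" and t: "0 \<le> t"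
  shows "0 < ls + z2 t \<and> ls + z2 t \<le> lbar \<and> \<bar>rg * z1 t\<bar> \<le> rg * \<rho> \<and>
    lyapV ls \<gamma> d1 d2 P w wx z1 z2 t \<le> lyapV ls \<gamma> d1 d2 P w wx z1 z2 0 * exp (- r * t)"
proof -
  interpret gains_trajectory D a g rg ls \<gamma> lbar A B C K P Q CF q p0 p1 d1 d2 \<rho> w wx wxx wt wxt z1 z2
    by (intro gains_trajectory.intro lyapunov_gains_axioms target_trajectory.intro closed_loop_axioms
        target_trajectory_axioms.intro assms(1))
  have "0 \<le> lyapV ls \<gamma> d1 d2 P w wx z1 z2 0"
    using lyapV_ge_state[of 0] d2 P_lower(1) by (meson mult_nonneg_nonneg order_trans less_imp_le zero_le_power2)
  moreover have "exp (- decay_rate * t) \<le> exp (- r * t)"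
    using mult_right_mono[OF r t] by simp
  ultimately show ?thesis
    using small_lyapV_decay[OF small t] by (meson mult_left_mono order_trans)
qed

lemma (in lyapunov_model) weights_exist:
  assumes "a\<^sup>2 / D\<^sup>2 < d1"
  shows "\<forall>\<^sub>F d2 in at_right 0. lyapunov_weights D a g rg ls \<gamma> lbar A B C K P Q CF q p0 p1 d1 d2 \<and>
           d2 * (2 * d1 * D + g) \<le> 8 * decay_rate"
proof -
  have "0 \<le> a\<^sup>2 / D\<^sup>2"
    by simp
  then have "0 \<le> d1"
    using assms by linarith
  moreover have "a\<^sup>2 / D = a\<^sup>2 / D\<^sup>2 * D"
    using D_pos by (simp add: power2_eq_square)
  then have "a\<^sup>2 / D \<le> d1 * D"
    using mult_right_mono[OF less_imp_le[OF assms], of D] D_pos by simp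
  ultimately have d1: "0 \<le> d1" "a\<^sup>2 / D \<le> d1 * D"
    by auto
  have "\<forall>\<^sub>F d2 in at_right 0. 0 < d2 \<and> d2 * (2 * (p1 * norm B)\<^sup>2 / q * \<gamma>) \<le> g / 4 \<and>
      d2 * (2 * (p1 * norm B)\<^sup>2 / q) \<le> g / 4 \<and> d2 * (2 * (p1 * norm B)\<^sup>2 / q) \<le> D / 4 \<and>
      d2 * (2 * d1 * D + g) \<le> 8 * decay_rate"
    using g_pos D_pos decay_rate_pos
    by (intro eventually_conj eventually_at_right_less eventually_mult_le_at_right_0) auto
  then show ?thesis
    by (rule eventually_mono) (auto intro!: lyapunov_weights.intro lyapunov_model_axioms
        lyapunov_weights_axioms.intro d1 simp: mult_ac)
qed

lemma (in lyapunov_weights) radius_exists: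
  assumes "0 < vmax"
  obtains \<rho> where "lyapunov_gains D a g rg ls \<gamma> lbar A B C K P Q CF q p0 p1 d1 d2 \<rho>" "rg * \<rho> \<le> vmax"
proof -
  have "\<forall>\<^sub>F \<rho> in at_right 0. 0 < \<rho> \<and> \<rho> * 2 \<le> ls \<and> \<rho> * 1 \<le> lbar - ls \<and>
      \<rho> * (rg * \<gamma>) \<le> g / 2 \<and> \<rho> * rg \<le> g / 2 \<and> \<rho> * rg \<le> D / 2 \<and>
      \<rho> * (rg * CF) \<le> g \<and> \<rho> * (rg * CF) \<le> D / 2 \<and> \<rho> * ((d1 + 1) * rg * CF * lbar) \<le> d2 * q / 2 \<and>
      \<rho> * rg \<le> vmax" (is "\<forall>\<^sub>F \<rho> in _. ?admissible \<rho>")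
    using assms g_pos D_pos ls_pos ls_less d2 Q_lower(1)
    by (intro eventually_conj eventually_at_right_less eventually_mult_le_at_right_0) auto
  then obtain \<rho> where "?admissible \<rho>"
    using eventually_happens trivial_limit_at_right_real by blast
  then show ?thesis
    using ls_pos
    by (intro that lyapunov_gains.intro lyapunov_weights_axioms lyapunov_gains_axioms.intro)
       (auto simp: mult_ac)
qed

definition (in lyapunov_model) small_data_stable :: "real \<Rightarrow> real \<Rightarrow> real \<Rightarrow> real \<Rightarrow> bool" where
  "small_data_stable d1 d2 vmax r \<longleftrightarrow> (\<exists>M > 0. \<forall>w wx wxx wt wxt z1 z2.
    target_solution D a g rg ls \<gamma> A B C K w wx wxx wt wxt z1 z2 \<and> lyapV ls \<gamma> d1 d2 P w wx z1 z2 0 < M \<longrightarrow>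
    (\<forall>t \<ge> 0. 0 < ls + z2 t \<and> ls + z2 t \<le> lbar \<and> \<bar>rg * z1 t\<bar> \<le> vmax \<and>
       lyapV ls \<gamma> d1 d2 P w wx z1 z2 t \<le> lyapV ls \<gamma> d1 d2 P w wx z1 z2 0 * exp (- r * t)))"

lemma (in lyapunov_model) eventually_small_data_stable:
  assumes d1: "a\<^sup>2 / D\<^sup>2 < d1" and vmax: "0 < vmax"
  shows "\<forall>\<^sub>F d2 in at_right 0. \<forall>r \<le> d2 * (2 * d1 * D + g) / 8. small_data_stable d1 d2 vmax r"
  using weights_exist[OF d1]
proof (rule eventually_mono, intro allI impI)
  fix d2 r
  assume weights: "lyapunov_weights D a g rg ls \<gamma> lbar A B C K P Q CF q p0 p1 d1 d2 \<and>
      d2 * (2 * d1 * D + g) \<le> 8 * decay_rate"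
    and r: "r \<le> d2 * (2 * d1 * D + g) / 8"
  obtain \<rho> where gains: "lyapunov_gains D a g rg ls \<gamma> lbar A B C K P Q CF q p0 p1 d1 d2 \<rho>"
    and "rg * \<rho> \<le> vmax"
    using lyapunov_weights.radius_exists[OF conjunct1[OF weights] vmax] by blast
  have "r \<le> decay_rate"
    using weights r by simp
  have "0 < d2 * p0 * \<rho>\<^sup>2"
    using lyapunov_gains.radius(1)[OF gains] lyapunov_weights.d2[OF conjunct1[OF weights]] P_lower(1) by simp
  then show "small_data_stable d1 d2 vmax r"
    unfolding small_data_stable_def
    using lyapunov_gains.small_data_decay[OF gains _ _ \<open>r \<le> decay_rate\<close>] \<open>rg * \<rho> \<le> vmax\<close>
    by (intro exI[of _ "d2 * p0 * \<rho>\<^sup>2"]) force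
qed

lemma lyapunov_model_exists:
  fixes D a g rg ls \<gamma> lbar atl \<beta> :: real and C K :: "real^2" and P Q :: "real^2^2"
  defines "A \<equiv> matA atl rg" and "B \<equiv> vecB \<beta>"
  assumes "D > 0" "g > 0" "rg > 0" "ls > 0" "\<gamma> > 0" "\<gamma> \<ge> a / D" "lbar > ls"
    and "pos_def P" and "pos_def Q"
    and "transpose (A + outer B K) ** P + P ** (A + outer B K) = - Q"
  obtains CF q p0 p1 where "lyapunov_model D a g rg ls \<gamma> lbar A B C K P Q CF q p0 p1"
proof -
  have "closed_loop rg A B K"
    by unfold_locales (simp_all add: A_def B_def matA_def vecB_def outer_def matrix_vector_mult_def sum_2)
  moreover obtain CF where "0 \<le> CF"
    "\<And>L x X. 0 \<le> x \<Longrightarrow> x \<le> L \<Longrightarrow> L \<le> lbar \<Longrightarrow> \<bar>Fterm D a g A B C K L x X\<bar> \<le> CF * norm X"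
    using Fterm_bound[where lbar = lbar and D = D and a = a and g = g and A = A and B = B and C = C and K = K]
    by blast
  moreover obtain q where "0 < q" "\<And>x. q * (norm x)\<^sup>2 \<le> x \<bullet> (Q *v x)"
    using pos_def_quadratic_form_ge[OF \<open>pos_def Q\<close>] by blast
  moreover obtain p0 where "0 < p0" "\<And>x. p0 * (norm x)\<^sup>2 \<le> x \<bullet> (P *v x)"
    using pos_def_quadratic_form_ge[OF \<open>pos_def P\<close>] by blast
  moreover obtain p1 where "0 < p1" "\<And>x. norm (P *v x) \<le> p1 * norm x"
    using matrix_vector_mult_bound by blast
  ultimately have "lyapunov_model D a g rg ls \<gamma> lbar A B C K P Q CF q p0 p1"
    using assms by (intro lyapunov_model.intro lyapunov_model_axioms.intro)
      (simp_all add: pos_def_def divide_le_eq mult.commute)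
  then show ?thesis
    by (rule that)
qed

theorem lemma3:
  fixes D a g rg lc cinf atl \<beta> ls \<gamma> lbar :: real
    and K :: "real^2" and P Q :: "real^2^2"
  defines "A \<equiv> matA atl rg" and "B \<equiv> vecB \<beta>" and "C \<equiv> vecC a g lc cinf D"
      and "vbar \<equiv> min (g / (4 * \<gamma>)) (D / (8 * lbar))"
  assumes "D > 0" "g > 0" "rg > 0" "lc > 0" "cinf > 0" "ls > 0" "\<gamma> > 0"
      and "\<gamma> \<ge> a / D" and "lbar > ls"
      and "hurwitz (A + outer B K)"
      and "pos_def P" and "pos_def Q"
      and "transpose (A + outer B K) ** P + P ** (A + outer B K) = - Q"
  shows "\<exists>d1min. \<forall>d1 > d1min. \<exists>d2max > 0. \<forall>d2. 0 < d2 \<and> d2 < d2max \<longrightarrow>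
     (let \<alpha> = Min {2 * g + D / (4 * lbar), (4 * g + d1 * D) / 2,
                    lambda_min Q / (2 * lambda_max P), d2 * (2 * d1 * D + g) / 4} in
      \<exists>M > 0. \<forall>w wx wxx wt wxt z1 z2.
        target_solution D a g rg ls \<gamma> A B C K w wx wxx wt wxt z1 z2 \<and>
        lyapV ls \<gamma> d1 d2 P w wx z1 z2 0 < M \<longrightarrow>
        (\<forall>t \<ge> 0. 0 < ls + z2 t \<and> ls + z2 t \<le> lbar \<and> \<bar>rg * z1 t\<bar> \<le> vbar \<and>
                 lyapV ls \<gamma> d1 d2 P w wx z1 z2 t
                   \<le> lyapV ls \<gamma> d1 d2 P w wx z1 z2 0 * exp (- (\<alpha> / 2) * t)))"
proof -
  obtain CF q p0 p1 where "lyapunov_model D a g rg ls \<gamma> lbar A B C K P Q CF q p0 p1"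
    using lyapunov_model_exists assms unfolding A_def B_def by blast
  then interpret lyapunov_model D a g rg ls \<gamma> lbar A B C K P Q CF q p0 p1 .
  have vbar: "0 < vbar"
    unfolding vbar_def using assms by simp
  show ?thesis (is "\<exists>d1min. \<forall>d1 > d1min. ?weights d1")
  proof (rule exI[of _ "a\<^sup>2 / D\<^sup>2"], intro allI impI)
    fix d1 assume "a\<^sup>2 / D\<^sup>2 < d1"
    then obtain d2max where "0 < d2max"
      and stable: "\<And>d2 r. 0 < d2 \<Longrightarrow> d2 < d2max \<Longrightarrow> r \<le> d2 * (2 * d1 * D + g) / 8 \<Longrightarrow>
        small_data_stable d1 d2 vbar r"
      using eventually_small_data_stable[OF _ vbar] unfolding eventually_at_right_field by blast
    \<comment> \<open>Only the last entry of the minimum defining \<open>\<alpha>\<close> matters.\<close>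
    have Min_le_last: "Min {2 * g + D / (4 * lbar), (4 * g + d1 * D) / 2, lambda_min Q / (2 * lambda_max P),
        d2 * (2 * d1 * D + g) / 4} \<le> d2 * (2 * d1 * D + g) / 4" for d2
      by (rule Min_le) auto
    have alpha: "Min {2 * g + D / (4 * lbar), (4 * g + d1 * D) / 2, lambda_min Q / (2 * lambda_max P),
        d2 * (2 * d1 * D + g) / 4} / 2 \<le> d2 * (2 * d1 * D + g) / 8" for d2
      using Min_le_last[of d2] by linarith
    show "?weights d1"
      unfolding Let_def
      by (rule exI[of _ d2max], intro conjI allI impI \<open>0 < d2max\<close>,
          rule stable[unfolded small_data_stable_def, OF _ _ alpha]) auto
  qed
qed

end
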